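(* Let $T,k\in\mathbb{N}$ and let $w\in\{0,1\}^T$ be a random variable satisfying the $\epsilon$-martingale condition. Decompose $w=xy$ with $|y|=k$. Then \[ \Pr[\text{there is an } x\text{-balanced fork for } xy] = \Pr[\mu_x(y)\ge 0]\le \exp(-\Omega(k)), \] where the asymptotic notation hides constants depending only on $\epsilon$.
   Context: Characteristic strings and forks. A characteristic string is $w=w_1\dots w_n\in\{0,1\}^n$; index $i$ is honest if $w_i=0$ and adversarial if $w_i=1$. A fork for $w$ is a rooted tree $F$ with edges directed away from the root $r$ and labeling $\ell:V\to\{0,\dots,n\}$ with (F1) $\ell(r)=0$; (F2) labels strictly increasing along directed paths; (F3) each honest index labels exactly one vertex; (F4) for honest $i<j$ the vertex labeled $i$ has strictly smaller depth than the vertex labeled $j$. Write $F\vdash w$. A vertex is honest if it is the root or labeled by an honest index. A tine is a directed path from the root; its length is its number of edges, $\ell(t)$ the label of its last vertex; $\mathrm{height}(F)$ is the maximal tine length. A fork is closed if every leaf is honest (the single-vertex fork is closed); a closed fork has a unique longest tine $\hat t$. Reach and relative margin. For closed $F\vdash w$ and tine $t$: $\mathrm{gap}(t)=\mathrm{length}(\hat t)-\mathrm{length}(t)$, $\mathrm{reserve}(t)=|\{i: w_i=1,\ i>\ell(t)\}|$, $\mathrm{reach}(t)=\mathrm{reserve}(t)-\mathrm{gap}(t)$. For $w=xy$, tines $t_1,t_2$ are disjoint over $y$ (written $t_1\not\sim_x t_2$) if they share no edge terminating at a vertex whose label is an index of $y$ (label $>|x|$); a tine may be paired with itself. $\mu_x(F)=\max_{t_1\not\sim_x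 t_2}\min\{\mathrm{reach}(t_1),\mathrm{reach}(t_2)\}$ and $\mu_x(y)=\max\{\mu_x(F): F\vdash xy \text{ closed}\}$. A fork $F\vdash xy$ is $x$-balanced if it contains tines $t_1\not\sim_x t_2$ with $\mathrm{length}(t_1)=\mathrm{length}(t_2)=\mathrm{height}(F)$. A random variable $W\in\{0,1\}^n$ satisfies the $\epsilon$-martingale condition ($\epsilon\in(0,1)$) if for every $t$, $\Pr[W_t=1\mid W_1,\dots,W_{t-1}]\le(1-\epsilon)/2$. *)

theory Defs
  imports "HOL-Probability.Probability_Mass_Function"
begin

text \<open>Characteristic strings are lists of booleans; index i (1-based) is
adversarial iff w ! (i-1) = True (i.e. w_i = 1), honest iff it is False.\<close>

definition adv_idx :: "bool list \<Rightarrow> nat \<Rightarrow> bool" where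
  "adv_idx w i \<longleftrightarrow> 1 \<le> i \<and> i \<le> length w \<and> w ! (i - 1)"

definition hon_idx :: "bool list \<Rightarrow> nat \<Rightarrow> bool" where
  "hon_idx w i \<longleftrightarrow> 1 \<le> i \<and> i \<le> length w \<and> \<not> w ! (i - 1)"

text \<open>A fork is a finite rooted tree whose vertices are natural numbers, the root
being 0; every non-root vertex v has the parent vertex parent v (edge directed
from parent v to v); label gives the labelling.\<close>

record fork =
  verts :: "nat set"
  parent :: "nat \<Rightarrow> nat"
  label :: "nat \<Rightarrow> nat"

definition depth :: "fork \<Rightarrow> nat \<Rightarrow> nat" where
  "depth F v = (LEAST n. (parent F ^^ n) v = 0)"

definition is_tree :: "fork \<Rightarrow> bool" where
  "is_tree F \<longleftrightarrow> finite (verts F) \<and> 0 \<in> verts F \<and>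
     (\<forall>v \<in> verts F - {0}. parent F v \<in> verts F \<and> (\<exists>n. (parent F ^^ n) v = 0))"

definition tine_verts :: "fork \<Rightarrow> nat \<Rightarrow> nat set" where
  "tine_verts F v = {(parent F ^^ i) v | i. i \<le> depth F v}"

definition is_fork :: "bool list \<Rightarrow> fork \<Rightarrow> bool" where
  "is_fork w F \<longleftrightarrow> is_tree F \<and>
     label F 0 = 0 \<and>
     (\<forall>v \<in> verts F. label F v \<le> length w) \<and>
     (\<forall>v \<in> verts F - {0}. label F (parent F v) < label F v) \<and>
     (\<forall>i. hon_idx w i \<longrightarrow> (\<exists>!v. v \<in> verts F \<and> label F v = i)) \<and>
     (\<forall>u \<in> verts F. \<forall>v \<in> verts F. hon_idx w (label F u) \<and> hon_idx w (label F v)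
        \<and> label F u < label F v \<longrightarrow> depth F u < depth F v)"

definition honest_vertex :: "bool list \<Rightarrow> fork \<Rightarrow> nat \<Rightarrow> bool" where
  "honest_vertex w F v \<longleftrightarrow> v = 0 \<or> hon_idx w (label F v)"

definition is_leaf :: "fork \<Rightarrow> nat \<Rightarrow> bool" where
  "is_leaf F v \<longleftrightarrow> v \<in> verts F \<and> \<not> (\<exists>u \<in> verts F - {0}. parent F u = v)"

definition closed_fork :: "bool list \<Rightarrow> fork \<Rightarrow> bool" where
  "closed_fork w F \<longleftrightarrow> is_fork w F \<and> (\<forall>v. is_leaf F v \<longrightarrow> honest_vertex w F v)"

definition height :: "fork \<Rightarrow> nat" where
  "height F = Max (depth F ` verts F)"

text \<open>Tines are identified with their terminal vertex; length = depth,
the label of the tine is the label of its last vertex.  For a closed fork the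
unique longest tine has length height F.\<close>

definition gap :: "fork \<Rightarrow> nat \<Rightarrow> int" where
  "gap F t = int (height F) - int (depth F t)"

definition reserve :: "bool list \<Rightarrow> fork \<Rightarrow> nat \<Rightarrow> int" where
  "reserve w F t = int (card {i. adv_idx w i \<and> i > label F t})"

definition reach :: "bool list \<Rightarrow> fork \<Rightarrow> nat \<Rightarrow> int" where
  "reach w F t = reserve w F t - gap F t"

text \<open>Disjointness over y (where |x| = m): the tines share no edge terminating at a
vertex with label > m; an edge is determined by the vertex it terminates at.\<close>
definition disjoint_over :: "nat \<Rightarrow> fork \<Rightarrow> nat \<Rightarrow> nat \<Rightarrow> bool" where
  "disjoint_over m F t1 t2 \<longleftrightarrow>
     (\<forall>u \<in> tine_verts F t1 \<inter> tine_verts F t2. u \<noteq> 0 \<longrightarrow> label F u \<le> m)"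

definition mu_fork :: "bool list \<Rightarrow> nat \<Rightarrow> fork \<Rightarrow> int" where
  "mu_fork w m F = Max {min (reach w F t1) (reach w F t2) | t1 t2.
       t1 \<in> verts F \<and> t2 \<in> verts F \<and> disjoint_over m F t1 t2}"

definition mu :: "bool list \<Rightarrow> bool list \<Rightarrow> int" where
  "mu x y = Max {mu_fork (x @ y) (length x) F | F. closed_fork (x @ y) F}"

definition balanced :: "bool list \<Rightarrow> nat \<Rightarrow> fork \<Rightarrow> bool" where
  "balanced w m F \<longleftrightarrow> is_fork w F \<and>
     (\<exists>t1 \<in> verts F. \<exists>t2 \<in> verts F. disjoint_over m F t1 t2 \<and>
        depth F t1 = height F \<and> depth F t2 = height F)"

text \<open>epsilon-martingale condition for a distribution W on {0,1}^T:
Pr[W_t = 1 | W_1..W_{t-1}] <= (1-eps)/2, stated multiplicatively (so that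
conditioning on null prefixes is vacuous).\<close>
definition martingale_cond :: "real \<Rightarrow> nat \<Rightarrow> bool list pmf \<Rightarrow> bool" where
  "martingale_cond \<epsilon> T W \<longleftrightarrow>
     (\<forall>p. length p < T \<longrightarrow>
        measure_pmf.prob W {w. take (length p + 1) w = p @ [True]}
          \<le> (1 - \<epsilon>) / 2 * measure_pmf.prob W {w. take (length p) w = p})"

end

(*
  The two probabilities agree because the two events coincide string by string.  A balanced fork
  is pruned to the closed fork spanned by its honest vertices; cutting each of its two longest tines
  back to its last honest vertex loses only adversarial vertices, which the reserve of that vertex
  pays for, so both truncated tines have nonnegative reach.  Conversely, two disjoint tines of
  nonnegative reach in a closed fork are prolonged by fresh adversarial vertices, one per index of
  their reserves, until both reach the height of the fork.

  For the bound, call an honest index h a Catalan slot if every interval around h contains more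
  honest than adversarial indices.  Every longest tine of every fork passes through the vertex
  labelled h, so no fork is balanced over y when y contains a Catalan slot.  Such a slot appears as
  soon as the walk (adversarial minus honest indices so far) reaches a strict new minimum after x and
  never climbs above it again.  A scanner with states Searching d and Found u v detects this event,
  and a potential on its states is a supermartingale that contracts by a factor bet < 1 on every
  symbol of y, provided each symbol is adversarial with conditional probability at most (1 - epsilon)/2.
  Since the potential is at least 1 on strings without a slot, the probability is at most
  C * bet ^ k.
*)

theory Submission
  imports Defs
begin

section \<open>Tines in trees and forks\<close>

lemma depth_zero [simp]: "depth F 0 = 0"
  unfolding depth_def by simp

lemma funpow_parent_depth:
  assumes T: "is_tree F" and v: "v \<in> verts F"
  shows "(parent F ^^ depth F v) v = 0"
proof (cases "v = 0")
  case False
  with T v obtain n where "(parent F ^^ n) v = 0" unfolding is_tree_def by blast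
  then show ?thesis unfolding depth_def by (rule LeastI)
qed simp

lemma funpow_parent_nonzero: "i < depth F v \<Longrightarrow> (parent F ^^ i) v \<noteq> 0"
  unfolding depth_def using not_less_Least by blast

lemma funpow_parent_in_verts:
  assumes T: "is_tree F" and v: "v \<in> verts F"
  shows "i \<le> depth F v \<Longrightarrow> (parent F ^^ i) v \<in> verts F"
proof (induction i)
  case (Suc i)
  then have "(parent F ^^ i) v \<in> verts F - {0}" using funpow_parent_nonzero[of i F v] by simp
  then show ?case using T unfolding is_tree_def by auto
qed (use v in simp)

lemma depth_parent:
  assumes T: "is_tree F" and v: "v \<in> verts F" and nz: "v \<noteq> 0"
  shows "depth F v = Suc (depth F (parent F v))"
proof -
  have pv: "parent F v \<in> verts F" using T v nz unfolding is_tree_def by auto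
  have "(parent F ^^ depth F v) v = 0" by (rule funpow_parent_depth[OF T v])
  moreover have "depth F v \<noteq> 0" using nz funpow_parent_depth[OF T v] by (metis funpow_0)
  ultimately obtain d where d: "depth F v = Suc d" "(parent F ^^ d) (parent F v) = 0"
    by (cases "depth F v") (auto simp: funpow_Suc_right simp del: funpow.simps)
  then have "depth F (parent F v) \<le> d" unfolding depth_def by (intro Least_le)
  moreover have "(parent F ^^ Suc (depth F (parent F v))) v = 0"
    using funpow_parent_depth[OF T pv] by (simp add: funpow_Suc_right del: funpow.simps)
  then have "depth F v \<le> Suc (depth F (parent F v))" unfolding depth_def by (rule Least_le)
  ultimately show ?thesis using d by simp
qed

lemma depth_funpow_parent:
  assumes T: "is_tree F" and v: "v \<in> verts F"
  shows "i \<le> depth F v \<Longrightarrow> depth F ((parent F ^^ i) v) = depth F v - i"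
proof (induction i)
  case (Suc i)
  have "(parent F ^^ i) v \<in> verts F" "(parent F ^^ i) v \<noteq> 0"
    using funpow_parent_in_verts[OF T v] funpow_parent_nonzero Suc.prems by auto
  then show ?case using depth_parent[OF T] Suc by simp
qed simp

lemma height_ge: "is_tree F \<Longrightarrow> v \<in> verts F \<Longrightarrow> depth F v \<le> height F"
  unfolding height_def is_tree_def by auto

lemma height_attained:
  assumes "is_tree F"
  obtains v where "v \<in> verts F" "depth F v = height F"
proof -
  have "finite (verts F)" "verts F \<noteq> {}" using assms unfolding is_tree_def by auto
  then have "Max (depth F ` verts F) \<in> depth F ` verts F" by (intro Max_in) auto
  then show ?thesis using that unfolding height_def by auto
qed

lemma self_in_tine_verts: "v \<in> tine_verts F v"
  unfolding tine_verts_def by (auto intro: exI[of _ 0])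

lemma tine_verts_subset_verts: "is_tree F \<Longrightarrow> v \<in> verts F \<Longrightarrow> tine_verts F v \<subseteq> verts F"
  unfolding tine_verts_def using funpow_parent_in_verts by blast

lemma tine_verts_funpow_parent:
  assumes T: "is_tree F" and v: "v \<in> verts F" and i: "i \<le> depth F v"
  shows "tine_verts F ((parent F ^^ i) v) \<subseteq> tine_verts F v"
proof
  fix x assume "x \<in> tine_verts F ((parent F ^^ i) v)"
  then obtain j where "j \<le> depth F ((parent F ^^ i) v)" "x = (parent F ^^ (j + i)) v"
    unfolding tine_verts_def by (auto simp: funpow_add)
  moreover have "j + i \<le> depth F v" if "j \<le> depth F ((parent F ^^ i) v)"
    using that depth_funpow_parent[OF T v i] i by simp
  ultimately show "x \<in> tine_verts F v" unfolding tine_verts_def by blast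
qed

lemma hon_idx_bounds: "hon_idx w i \<Longrightarrow> 1 \<le> i \<and> i \<le> length w"
  unfolding hon_idx_def by auto

lemma not_hon_and_adv_idx: "hon_idx w i \<Longrightarrow> \<not> adv_idx w i"
  unfolding hon_idx_def adv_idx_def by auto

lemma finite_adv_idx_greater [simp]: "finite {i. adv_idx w i \<and> a < i}"
  by (rule finite_subset[of _ "{..length w}"]) (auto simp: adv_idx_def)

lemma is_fork_tree: "is_fork w F \<Longrightarrow> is_tree F"
  unfolding is_fork_def by simp

lemma label_root: "is_fork w F \<Longrightarrow> label F 0 = 0"
  unfolding is_fork_def by simp

lemma label_le_length: "is_fork w F \<Longrightarrow> v \<in> verts F \<Longrightarrow> label F v \<le> length w"
  unfolding is_fork_def by blast

lemma label_parent_less: "is_fork w F \<Longrightarrow> v \<in> verts F \<Longrightarrow> v \<noteq> 0 \<Longrightarrow> label F (parent F v) < label F v"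
  unfolding is_fork_def by blast

lemma ex1_hon_vertex: "is_fork w F \<Longrightarrow> hon_idx w i \<Longrightarrow> \<exists>!v. v \<in> verts F \<and> label F v = i"
  unfolding is_fork_def by blast

lemma depth_less_if_hon_label_less:
  "is_fork w F \<Longrightarrow> u \<in> verts F \<Longrightarrow> v \<in> verts F \<Longrightarrow> hon_idx w (label F u) \<Longrightarrow>
    hon_idx w (label F v) \<Longrightarrow> label F u < label F v \<Longrightarrow> depth F u < depth F v"
  unfolding is_fork_def by blast

lemma hon_or_adv_label:
  assumes Fk: "is_fork w F" and v: "v \<in> verts F" and nz: "v \<noteq> 0"
  shows "hon_idx w (label F v) \<or> adv_idx w (label F v)"
  using label_parent_less[OF Fk v nz] label_le_length[OF Fk v]
  unfolding hon_idx_def adv_idx_def by auto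

lemma label_funpow_parent_less:
  assumes Fk: "is_fork w F" and v: "v \<in> verts F" and ij: "i < j"
  shows "j \<le> depth F v \<Longrightarrow> label F ((parent F ^^ j) v) < label F ((parent F ^^ i) v)"
  using ij
proof (induction j)
  case (Suc j)
  have "(parent F ^^ j) v \<in> verts F" "(parent F ^^ j) v \<noteq> 0"
    using funpow_parent_in_verts[OF is_fork_tree[OF Fk] v] funpow_parent_nonzero Suc.prems by auto
  then have "label F ((parent F ^^ Suc j) v) < label F ((parent F ^^ j) v)"
    using label_parent_less[OF Fk] by simp
  then show ?case using Suc by (cases "i = j") auto
qed simp

lemma depth_le_label:
  assumes Fk: "is_fork w F"
  shows "v \<in> verts F \<Longrightarrow> depth F v \<le> label F v"
proof (induction "depth F v" arbitrary: v)
  case (Suc n)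
  then have nz: "v \<noteq> 0" by (metis depth_zero nat.distinct(1))
  have T: "is_tree F" using is_fork_tree[OF Fk] .
  have d: "depth F v = Suc (depth F (parent F v))" using depth_parent[OF T Suc.prems nz] .
  have "parent F v \<in> verts F" using Suc.prems nz T unfolding is_tree_def by auto
  then have "depth F (parent F v) \<le> label F (parent F v)" using Suc.hyps d by simp
  then show ?case using d label_parent_less[OF Fk Suc.prems nz] by simp
qed simp

lemma height_le_length:
  assumes Fk: "is_fork w F"
  shows "height F \<le> length w"
proof -
  obtain v where "v \<in> verts F" "depth F v = height F" using height_attained[OF is_fork_tree[OF Fk]] .
  then show ?thesis using depth_le_label[OF Fk] label_le_length[OF Fk] by (metis le_trans)
qed

section \<open>Catalan slots\<close>

lemma depth_gain_honest:
  assumes Fk: "is_fork w F" and z: "z \<in> verts F" and zh: "z = 0 \<or> hon_idx w (label F z)"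
  shows "c \<in> verts F \<Longrightarrow> hon_idx w (label F c) \<Longrightarrow> label F z < label F c \<Longrightarrow>
    depth F z + card {i. label F z < i \<and> i \<le> label F c \<and> hon_idx w i} \<le> depth F c"
proof (induction "label F c" arbitrary: c rule: less_induct)
  case less
  define H where "H = {i. label F z < i \<and> i < label F c \<and> hon_idx w i}"
  have "finite H" unfolding H_def by simp
  moreover have "{i. label F z < i \<and> i \<le> label F c \<and> hon_idx w i} = insert (label F c) H"
    using less.prems unfolding H_def by auto
  ultimately have card_split: "card {i. label F z < i \<and> i \<le> label F c \<and> hon_idx w i} = Suc (card H)"
    unfolding H_def by simp
  show ?case
  proof (cases "H = {}")
    case True
    have "depth F z < depth F c"
    proof (cases "z = 0")
      case True
      moreover have "c \<noteq> 0" using less.prems(2) label_root[OF Fk] hon_idx_bounds[of w "label F c"] by (metis not_one_le_zero)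
      ultimately show ?thesis using depth_parent[OF is_fork_tree[OF Fk] less.prems(1)] by simp
    qed (use zh depth_less_if_hon_label_less[OF Fk z less.prems(1)] less.prems in simp)
    then show ?thesis using card_split True by simp
  next
    case False
    define j where "j = Max H"
    have j: "j \<in> H" and jmax: "\<And>i. i \<in> H \<Longrightarrow> i \<le> j"
      unfolding j_def using \<open>finite H\<close> False by auto
    then have hj: "hon_idx w j" and jc: "label F z < j" "j < label F c" unfolding H_def by auto
    obtain c' where c': "c' \<in> verts F" "label F c' = j" using ex1_hon_vertex[OF Fk hj] by blast
    have "H = {i. label F z < i \<and> i \<le> j \<and> hon_idx w i}"
      using jmax jc unfolding H_def by fastforce
    moreover have "depth F z + card {i. label F z < i \<and> i \<le> j \<and> hon_idx w i} \<le> depth F c'"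
      using less.hyps[of c'] c' jc hj by simp
    moreover have "depth F c' < depth F c"
      using depth_less_if_hon_label_less[OF Fk c'(1) less.prems(1)] c' hj jc less.prems by simp
    ultimately show ?thesis using card_split by simp
  qed
qed

lemma length_adversarial_stretch:
  assumes Fk: "is_fork w F" and v: "v \<in> verts F" and hd: "hi \<le> depth F v"
    and adv: "\<And>i. lo \<le> i \<Longrightarrow> i < hi \<Longrightarrow> adv_idx w (label F ((parent F ^^ i) v))"
  shows "hi - lo \<le> card {j. label F ((parent F ^^ hi) v) < j \<and> j \<le> label F ((parent F ^^ lo) v) \<and> adv_idx w j}"
proof -
  let ?f = "\<lambda>i. label F ((parent F ^^ i) v)"
  have less: "?f j < ?f i" if "i < j" "j \<le> hi" for i j
    using label_funpow_parent_less[OF Fk v that(1)] that hd by simp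
  have "inj_on ?f {lo..<hi}"
    by (rule inj_onI) (metis atLeastLessThan_iff less less_le_not_le linorder_neqE_nat)
  moreover have "?f ` {lo..<hi} \<subseteq> {j. ?f hi < j \<and> j \<le> ?f lo \<and> adv_idx w j}"
    using less adv by (fastforce simp: le_less)
  moreover have "finite {j. ?f hi < j \<and> j \<le> ?f lo \<and> adv_idx w j}" by simp
  ultimately show ?thesis using card_inj_on_le by fastforce
qed

definition catalan_slot :: "bool list \<Rightarrow> nat \<Rightarrow> bool" where
  "catalan_slot w h \<longleftrightarrow> hon_idx w h \<and> (\<forall>a b. a < h \<longrightarrow> h < b \<longrightarrow> b \<le> Suc (length w) \<longrightarrow>
     card {i. a < i \<and> i < b \<and> adv_idx w i} < card {i. a < i \<and> i < b \<and> hon_idx w i})"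

lemma catalan_slot_not_between_honest:
  assumes Fk: "is_fork w F" and cat: "catalan_slot w h" and t: "t \<in> verts F"
    and ij: "i < j" "j \<le> depth F t"
    and hc: "hon_idx w (label F ((parent F ^^ i) t))" "h < label F ((parent F ^^ i) t)"
    and hz: "(parent F ^^ j) t = 0 \<or> hon_idx w (label F ((parent F ^^ j) t))" "label F ((parent F ^^ j) t) < h"
    and adv: "\<And>l. i < l \<Longrightarrow> l < j \<Longrightarrow> adv_idx w (label F ((parent F ^^ l) t))"
  shows False
proof -
  define c where "c = (parent F ^^ i) t"
  define z where "z = (parent F ^^ j) t"
  let ?A = "{l. label F z < l \<and> l < label F c \<and> adv_idx w l}"
  let ?H = "{l. label F z < l \<and> l < label F c \<and> hon_idx w l}"
  have T: "is_tree F" using is_fork_tree[OF Fk] .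
  have cz: "c \<in> verts F" "z \<in> verts F"
    unfolding c_def z_def using funpow_parent_in_verts[OF T t] ij by auto
  have "j - Suc i \<le> card {l. label F z < l \<and> l \<le> label F ((parent F ^^ Suc i) t) \<and> adv_idx w l}"
    using length_adversarial_stretch[OF Fk t ij(2), of "Suc i"] adv ij(1) unfolding z_def by simp
  also have "\<dots> \<le> card ?A"
    using label_funpow_parent_less[OF Fk t, of i "Suc i"] ij unfolding c_def by (intro card_mono) auto
  finally have stretch: "j - Suc i \<le> card ?A" .
  have "depth F z + card {l. label F z < l \<and> l \<le> label F c \<and> hon_idx w l} \<le> depth F c"
    using depth_gain_honest[OF Fk cz(2) hz(1)[folded z_def] cz(1) hc(1)[folded c_def]] hz(2) hc(2)
    unfolding c_def z_def by simp
  moreover have "{l. label F z < l \<and> l \<le> label F c \<and> hon_idx w l} = insert (label F c) ?H"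
    using hc hz unfolding c_def z_def by auto
  moreover have "depth F c = depth F t - i" "depth F z = depth F t - j"
    unfolding c_def z_def using depth_funpow_parent[OF T t] ij by auto
  ultimately have "card ?H \<le> card ?A" using stretch ij by simp
  moreover have "card ?A < card ?H"
    using cat hc(2) hz(2) label_le_length[OF Fk cz(1)] unfolding catalan_slot_def c_def z_def by simp
  ultimately show False by simp
qed

lemma catalan_slot_not_below_max_tine:
  assumes Fk: "is_fork w F" and cat: "catalan_slot w h"
    and t: "t \<in> verts F" "depth F t = height F" and i: "i \<le> depth F t"
    and hz: "(parent F ^^ i) t = 0 \<or> hon_idx w (label F ((parent F ^^ i) t))" "label F ((parent F ^^ i) t) < h"
    and adv: "\<And>j. j < i \<Longrightarrow> adv_idx w (label F ((parent F ^^ j) t))"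
  shows False
proof -
  define z where "z = (parent F ^^ i) t"
  note z = z_def hz[folded z_def]
  let ?A = "{j. label F z < j \<and> j < Suc (length w) \<and> adv_idx w j}"
  define Hs where "Hs = {j. label F z < j \<and> j < Suc (length w) \<and> hon_idx w j}"
  have T: "is_tree F" using is_fork_tree[OF Fk] .
  have "i \<le> card {j. label F z < j \<and> j \<le> label F t \<and> adv_idx w j}"
    using length_adversarial_stretch[OF Fk t(1) i, of 0] adv z(1) by simp
  also have "\<dots> \<le> card ?A"
    using label_le_length[OF Fk t(1)] by (intro card_mono) auto
  finally have stretch: "i \<le> card ?A" .
  have "0 < h" using cat hon_idx_bounds unfolding catalan_slot_def by fastforce
  then have less: "card ?A < card Hs"
    using cat z(3) hon_idx_bounds unfolding catalan_slot_def Hs_def by fastforce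
  have "finite Hs" unfolding Hs_def by simp
  moreover have "Hs \<noteq> {}" using less by auto
  ultimately have js: "Max Hs \<in> Hs" "\<And>j. j \<in> Hs \<Longrightarrow> j \<le> Max Hs" by auto
  then obtain cs where cs: "cs \<in> verts F" "label F cs = Max Hs"
    using ex1_hon_vertex[OF Fk] unfolding Hs_def by blast
  have "Hs = {j. label F z < j \<and> j \<le> label F cs \<and> hon_idx w j}"
    using js cs(2) unfolding Hs_def by fastforce
  moreover have "z \<in> verts F" using funpow_parent_in_verts[OF T t(1) i] z(1) by simp
  ultimately have "depth F z + card Hs \<le> depth F cs"
    using depth_gain_honest[OF Fk _ z(2) cs(1)] js(1) cs(2) unfolding Hs_def by simp
  moreover have "depth F cs \<le> depth F t" using height_ge[OF T cs(1)] t(2) by simp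
  moreover have "depth F z = depth F t - i" using depth_funpow_parent[OF T t(1) i] z(1) by simp
  ultimately show False using stretch less i by simp
qed

text \<open>Walking down the tine from its end, let z be the first vertex that is the root or honest with
  label below h, and c the honest vertex closest above z, if any.  Either way the tine gains more
  depth after z than the adversarial indices between the labels can pay for.\<close>

lemma catalan_slot_on_max_tine:
  assumes Fk: "is_fork w F" and t: "t \<in> verts F" "depth F t = height F"
    and cat: "catalan_slot w h"
  shows "\<exists>i\<le>depth F t. label F ((parent F ^^ i) t) = h"
proof (rule ccontr)
  assume miss: "\<not> ?thesis"
  have T: "is_tree F" using is_fork_tree[OF Fk] .
  let ?a = "\<lambda>i. (parent F ^^ i) t"
  let ?low = "\<lambda>i. (?a i = 0 \<or> hon_idx w (label F (?a i))) \<and> label F (?a i) < h"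
  have "0 < h" using cat hon_idx_bounds unfolding catalan_slot_def by fastforce
  then have "?low (depth F t)" using funpow_parent_depth[OF T t(1)] label_root[OF Fk] by simp
  define iz where "iz = (LEAST i. ?low i)"
  have low: "?low iz" unfolding iz_def by (rule LeastI) fact
  have iz: "iz \<le> depth F t" unfolding iz_def by (rule Least_le) fact
  have adv_or_above: "adv_idx w (label F (?a j)) \<or> hon_idx w (label F (?a j)) \<and> h < label F (?a j)"
    if "j < iz" for j
  proof -
    have "j \<le> depth F t" "\<not> ?low j" using that iz not_less_Least[of j ?low] unfolding iz_def by auto
    moreover have "?a j \<noteq> 0" using funpow_parent_nonzero that iz by simp
    ultimately show ?thesis
      using hon_or_adv_label[OF Fk funpow_parent_in_verts[OF T t(1)]] miss by fastforce
  qed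
  show False
  proof (cases "\<exists>j<iz. hon_idx w (label F (?a j))")
    case True
    define ic where "ic = (GREATEST j. j < iz \<and> hon_idx w (label F (?a j)))"
    have ic: "ic < iz" "hon_idx w (label F (?a ic))"
      and above_ic: "\<And>j. j < iz \<Longrightarrow> hon_idx w (label F (?a j)) \<Longrightarrow> j \<le> ic"
      using True GreatestI_nat[of _ _ iz] Greatest_le_nat[of _ _ iz] unfolding ic_def
      by (metis (no_types, lifting) less_imp_le)+
    have "h < label F (?a ic)" using adv_or_above[OF ic(1)] ic(2) not_hon_and_adv_idx by blast
    moreover have "adv_idx w (label F (?a l))" if "ic < l" "l < iz" for l
      using adv_or_above[OF that(2)] above_ic[OF that(2)] that(1) by fastforce
    ultimately show False
      by (rule catalan_slot_not_between_honest[OF Fk cat t(1) ic(1) iz ic(2) _ low[THEN conjunct1] low[THEN conjunct2]])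
  next
    case False
    then have "adv_idx w (label F (?a j))" if "j < iz" for j using adv_or_above[OF that] that by blast
    then show False
      using catalan_slot_not_below_max_tine[OF Fk cat t iz low[THEN conjunct1] low[THEN conjunct2]]
      by blast
  qed
qed

lemma catalan_slot_not_balanced:
  assumes cat: "catalan_slot w h" and mh: "m < h"
  shows "\<not> balanced w m F"
proof
  assume "balanced w m F"
  then obtain t1 t2 where Fk: "is_fork w F" and t: "t1 \<in> verts F" "t2 \<in> verts F"
    and dj: "disjoint_over m F t1 t2" and d: "depth F t1 = height F" "depth F t2 = height F"
    unfolding balanced_def by blast
  have T: "is_tree F" using is_fork_tree[OF Fk] .
  obtain i1 where i1: "i1 \<le> depth F t1" "label F ((parent F ^^ i1) t1) = h"
    using catalan_slot_on_max_tine[OF Fk t(1) d(1) cat] by blast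
  obtain i2 where i2: "i2 \<le> depth F t2" "label F ((parent F ^^ i2) t2) = h"
    using catalan_slot_on_max_tine[OF Fk t(2) d(2) cat] by blast
  have hh: "hon_idx w h" using cat unfolding catalan_slot_def by simp
  have "(parent F ^^ i1) t1 \<in> verts F" "(parent F ^^ i2) t2 \<in> verts F"
    using funpow_parent_in_verts[OF T] t i1(1) i2(1) by auto
  then have "(parent F ^^ i1) t1 = (parent F ^^ i2) t2"
    using ex1_hon_vertex[OF Fk hh] i1(2) i2(2) by blast
  then have "(parent F ^^ i1) t1 \<in> tine_verts F t1 \<inter> tine_verts F t2"
    unfolding tine_verts_def using i1 i2 by blast
  moreover have "(parent F ^^ i1) t1 \<noteq> 0"
    using i1(2) label_root[OF Fk] hon_idx_bounds[OF hh] by (metis not_one_le_zero)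
  ultimately have "label F ((parent F ^^ i1) t1) \<le> m" using dj unfolding disjoint_over_def by blast
  then show False using i1(2) mh by simp
qed

section \<open>Closed forks and the relative margin\<close>

lemma tine_verts_root [simp]: "tine_verts F 0 = {0}"
  unfolding tine_verts_def by simp

lemma mu_fork_greatest:
  assumes T: "is_tree F"
  shows "\<exists>t1\<in>verts F. \<exists>t2\<in>verts F. disjoint_over m F t1 t2 \<and>
      mu_fork w m F = min (reach w F t1) (reach w F t2)"
    and "t1 \<in> verts F \<Longrightarrow> t2 \<in> verts F \<Longrightarrow> disjoint_over m F t1 t2 \<Longrightarrow>
      min (reach w F t1) (reach w F t2) \<le> mu_fork w m F"
proof -
  define P where "P = {min (reach w F t1) (reach w F t2) | t1 t2.
      t1 \<in> verts F \<and> t2 \<in> verts F \<and> disjoint_over m F t1 t2}"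
  have "P \<subseteq> (\<lambda>(t1, t2). min (reach w F t1) (reach w F t2)) ` (verts F \<times> verts F)"
    unfolding P_def by auto
  then have "finite P" using T finite_subset unfolding is_tree_def by blast
  moreover have "0 \<in> verts F" "disjoint_over m F 0 0"
    using T unfolding is_tree_def disjoint_over_def by auto
  then have "P \<noteq> {}" unfolding P_def by blast
  ultimately have max: "Max P \<in> P" "\<And>r. r \<in> P \<Longrightarrow> r \<le> Max P" by auto
  have mu: "mu_fork w m F = Max P" unfolding mu_fork_def P_def by (rule refl)
  from max(1) show "\<exists>t1\<in>verts F. \<exists>t2\<in>verts F. disjoint_over m F t1 t2 \<and>
      mu_fork w m F = min (reach w F t1) (reach w F t2)"
    unfolding mu unfolding P_def by blast
  show "min (reach w F t1) (reach w F t2) \<le> mu_fork w m F"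
    if "t1 \<in> verts F" "t2 \<in> verts F" "disjoint_over m F t1 t2"
    unfolding mu using that by (intro max(2)) (auto simp: P_def)
qed

lemma reach_bounds:
  assumes Fk: "is_fork w F" and t: "t \<in> verts F"
  shows "\<bar>reach w F t\<bar> \<le> int (length w)"
proof -
  have "{i. adv_idx w i \<and> i > label F t} \<subseteq> {1..length w}" unfolding adv_idx_def by auto
  then have "card {i. adv_idx w i \<and> i > label F t} \<le> length w"
    using card_mono[of "{1..length w}"] by fastforce
  moreover have "depth F t \<le> height F" using height_ge[OF is_fork_tree[OF Fk] t] .
  moreover have "height F \<le> length w" using height_le_length[OF Fk] .
  ultimately show ?thesis unfolding reach_def gap_def reserve_def by simp
qed

lemma mu_fork_bounds:
  assumes Fk: "is_fork w F"
  shows "\<bar>mu_fork w m F\<bar> \<le> int (length w)"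
proof -
  obtain t1 t2 where t: "t1 \<in> verts F" "t2 \<in> verts F"
    and mu: "mu_fork w m F = min (reach w F t1) (reach w F t2)"
    using mu_fork_greatest(1)[OF is_fork_tree[OF Fk]] by blast
  show ?thesis using reach_bounds[OF Fk t(1)] reach_bounds[OF Fk t(2)] unfolding mu by linarith
qed

definition honest_parent :: "bool list \<Rightarrow> nat \<Rightarrow> nat" where
  "honest_parent w i = (if \<exists>j<i. hon_idx w j then Max {j. j < i \<and> hon_idx w j} else 0)"

definition honest_chain :: "bool list \<Rightarrow> fork" where
  "honest_chain w = \<lparr>verts = insert 0 {i. hon_idx w i}, parent = honest_parent w, label = id\<rparr>"

lemma honest_parent_greatest:
  assumes "hon_idx w j" "j < i"
  shows "hon_idx w (honest_parent w i)" "honest_parent w i < i" "j \<le> honest_parent w i"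
proof -
  let ?J = "{j. j < i \<and> hon_idx w j}"
  have fin: "finite ?J" and ne: "?J \<noteq> {}" using assms by auto
  have "honest_parent w i = Max ?J" unfolding honest_parent_def using assms by auto
  then show "hon_idx w (honest_parent w i)" "honest_parent w i < i" "j \<le> honest_parent w i"
    using Max_in[OF fin ne] Max_ge[OF fin] assms by auto
qed

lemma honest_parent_less: "0 < i \<Longrightarrow> honest_parent w i < i"
proof (cases "\<exists>j<i. hon_idx w j")
  case True
  then show ?thesis using honest_parent_greatest(2) by blast
qed (auto simp: honest_parent_def)

lemma honest_parent_mem: "honest_parent w i \<in> insert 0 {i. hon_idx w i}"
proof (cases "\<exists>j<i. hon_idx w j")
  case True
  then show ?thesis using honest_parent_greatest(1) by blast
qed (auto simp: honest_parent_def)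

lemma funpow_honest_parent: "v \<le> n \<Longrightarrow> (honest_parent w ^^ n) v = 0"
proof (induction n arbitrary: v)
  case (Suc n)
  have "honest_parent w v \<le> n"
    using honest_parent_less[of v w] Suc.prems by (cases "v = 0") (auto simp: honest_parent_def)
  then show ?case using Suc.IH by (simp add: funpow_Suc_right del: funpow.simps)
qed simp

lemma is_tree_honest_chain: "is_tree (honest_chain w)"
proof -
  have "finite {i. hon_idx w i}"
    by (rule finite_subset[of _ "{..length w}"]) (auto simp: hon_idx_def)
  moreover have "\<exists>n. (honest_parent w ^^ n) v = 0" for v
    using funpow_honest_parent[OF order_refl] by blast
  ultimately show ?thesis
    unfolding is_tree_def honest_chain_def using honest_parent_mem by auto
qed

lemma depth_honest_chain_less:
  "hon_idx w v \<Longrightarrow> hon_idx w u \<Longrightarrow> u < v \<Longrightarrow> depth (honest_chain w) u < depth (honest_chain w) v"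
proof (induction v arbitrary: u rule: less_induct)
  case (less v)
  let ?F = "honest_chain w"
  have "v \<in> verts ?F" "v \<noteq> 0" using less.prems hon_idx_bounds[of w v] unfolding honest_chain_def by auto
  then have dv: "depth ?F v = Suc (depth ?F (honest_parent w v))"
    using depth_parent[OF is_tree_honest_chain] unfolding honest_chain_def by simp
  note hp = honest_parent_greatest[OF less.prems(2,3)]
  show ?case
  proof (cases "u = honest_parent w v")
    case False
    then have "u < honest_parent w v" using hp(3) by simp
    then have "depth ?F u < depth ?F (honest_parent w v)" by (rule less.IH[OF hp(2,1) less.prems(2)])
    then show ?thesis using dv by simp
  qed (use dv in simp)
qed

lemma closed_fork_honest_chain: "closed_fork w (honest_chain w)"
proof -
  let ?F = "honest_chain w"
  have "is_fork w ?F"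
    unfolding is_fork_def
  proof (intro conjI ballI allI impI)
    show "is_tree ?F" by (rule is_tree_honest_chain)
    show "label ?F 0 = 0" by (simp add: honest_chain_def)
  next
    fix v assume "v \<in> verts ?F"
    then show "label ?F v \<le> length w" by (auto simp: honest_chain_def hon_idx_def)
  next
    fix v assume "v \<in> verts ?F - {0}"
    then show "label ?F (parent ?F v) < label ?F v" by (simp add: honest_chain_def honest_parent_less)
  next
    fix i assume "hon_idx w i"
    then show "\<exists>!v. v \<in> verts ?F \<and> label ?F v = i" by (auto simp: honest_chain_def)
  next
    fix u v assume "u \<in> verts ?F" "v \<in> verts ?F"
      "hon_idx w (label ?F u) \<and> hon_idx w (label ?F v) \<and> label ?F u < label ?F v"
    then show "depth ?F u < depth ?F v" using depth_honest_chain_less by (simp add: honest_chain_def)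
  qed
  moreover have "honest_vertex w ?F v" if "v \<in> verts ?F" for v
    using that by (auto simp: honest_vertex_def honest_chain_def)
  ultimately show ?thesis unfolding closed_fork_def is_leaf_def by blast
qed

lemma mu_greatest:
  "\<exists>F. closed_fork (x @ y) F \<and> mu x y = mu_fork (x @ y) (length x) F"
  "closed_fork (x @ y) F \<Longrightarrow> mu_fork (x @ y) (length x) F \<le> mu x y"
proof -
  define M where "M = {mu_fork (x @ y) (length x) F | F. closed_fork (x @ y) F}"
  have "M \<subseteq> {- int (length (x @ y)) .. int (length (x @ y))}"
  proof
    fix r assume "r \<in> M"
    then obtain F where "closed_fork (x @ y) F" "r = mu_fork (x @ y) (length x) F"
      unfolding M_def by blast
    then show "r \<in> {- int (length (x @ y)) .. int (length (x @ y))}"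
      using mu_fork_bounds[of "x @ y" F "length x"] unfolding closed_fork_def by (simp add: abs_le_iff)
  qed
  then have "finite M" using finite_subset by blast
  moreover have "M \<noteq> {}" unfolding M_def using closed_fork_honest_chain by blast
  ultimately have max: "Max M \<in> M" "\<And>r. r \<in> M \<Longrightarrow> r \<le> Max M" by auto
  have mu: "mu x y = Max M" unfolding mu_def M_def by (rule refl)
  from max(1) show "\<exists>F. closed_fork (x @ y) F \<and> mu x y = mu_fork (x @ y) (length x) F"
    unfolding mu unfolding M_def by blast
  show "closed_fork (x @ y) F \<Longrightarrow> mu_fork (x @ y) (length x) F \<le> mu x y"
    unfolding mu by (intro max(2)) (auto simp: M_def)
qed

section \<open>Balanced forks have nonnegative margin\<close>

lemma depth_verts_update [simp]: "depth (F\<lparr>verts := V\<rparr>) = depth F"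
  unfolding depth_def by (simp add: fun_eq_iff)

lemma tine_verts_verts_update [simp]: "tine_verts (F\<lparr>verts := V\<rparr>) = tine_verts F"
  unfolding tine_verts_def by (simp add: fun_eq_iff)

lemma tine_verts_parent:
  assumes T: "is_tree F" and u: "u \<in> verts F" and v: "v \<in> tine_verts F u" "v \<noteq> 0"
  shows "parent F v \<in> tine_verts F u"
proof -
  obtain i where i: "i \<le> depth F u" "v = (parent F ^^ i) u" using v(1) unfolding tine_verts_def by blast
  then have "i \<noteq> depth F u" using funpow_parent_depth[OF T u] v(2) by auto
  then show ?thesis
    unfolding tine_verts_def using i by (intro CollectI exI[of _ "Suc i"]) simp
qed

lemma tine_verts_child:
  assumes v: "v \<in> tine_verts F u" "v \<noteq> u"
  obtains c where "c \<in> tine_verts F u" "c \<noteq> 0" "parent F c = v"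
proof -
  obtain i where i: "i \<le> depth F u" "v = (parent F ^^ i) u" using v(1) unfolding tine_verts_def by blast
  then obtain j where j: "i = Suc j" using v(2) by (cases i) auto
  have "(parent F ^^ j) u \<in> tine_verts F u" unfolding tine_verts_def using i(1) j by auto
  moreover have "(parent F ^^ j) u \<noteq> 0" using funpow_parent_nonzero i(1) j by simp
  moreover have "parent F ((parent F ^^ j) u) = v" using i(2) j by simp
  ultimately show ?thesis using that by blast
qed

lemma is_fork_restrict_verts:
  assumes Fk: "is_fork w F" and V: "0 \<in> V" "V \<subseteq> verts F" "\<And>v. v \<in> V - {0} \<Longrightarrow> parent F v \<in> V"
    and hon: "\<And>v. v \<in> verts F \<Longrightarrow> hon_idx w (label F v) \<Longrightarrow> v \<in> V"
  shows "is_fork w (F\<lparr>verts := V\<rparr>)"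
  unfolding is_fork_def
proof (intro conjI ballI allI impI)
  have T: "is_tree F" using is_fork_tree[OF Fk] .
  have "finite V" using T V(2) finite_subset unfolding is_tree_def by blast
  moreover have "\<exists>n. (parent F ^^ n) v = 0" if "v \<in> V - {0}" for v
    using T V(2) that unfolding is_tree_def by blast
  ultimately show "is_tree (F\<lparr>verts := V\<rparr>)" using V unfolding is_tree_def by simp
  show "label (F\<lparr>verts := V\<rparr>) 0 = 0" using label_root[OF Fk] by simp
next
  fix v assume "v \<in> verts (F\<lparr>verts := V\<rparr>)"
  then show "label (F\<lparr>verts := V\<rparr>) v \<le> length w" using label_le_length[OF Fk] V(2) by auto
next
  fix v assume "v \<in> verts (F\<lparr>verts := V\<rparr>) - {0}"
  then show "label (F\<lparr>verts := V\<rparr>) (parent (F\<lparr>verts := V\<rparr>) v) < label (F\<lparr>verts := V\<rparr>) v"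
    using label_parent_less[OF Fk] V(2) by auto
next
  fix i assume "hon_idx w i"
  then show "\<exists>!v. v \<in> verts (F\<lparr>verts := V\<rparr>) \<and> label (F\<lparr>verts := V\<rparr>) v = i"
    using ex1_hon_vertex[OF Fk] hon V(2) by simp blast
next
  fix u v
  assume "u \<in> verts (F\<lparr>verts := V\<rparr>)" "v \<in> verts (F\<lparr>verts := V\<rparr>)"
    "hon_idx w (label (F\<lparr>verts := V\<rparr>) u) \<and> hon_idx w (label (F\<lparr>verts := V\<rparr>) v) \<and>
     label (F\<lparr>verts := V\<rparr>) u < label (F\<lparr>verts := V\<rparr>) v"
  then show "depth (F\<lparr>verts := V\<rparr>) u < depth (F\<lparr>verts := V\<rparr>) v"
    using depth_less_if_hon_label_less[OF Fk] V(2) by auto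
qed

definition honest_trim :: "bool list \<Rightarrow> fork \<Rightarrow> fork" where
  "honest_trim w F =
     F\<lparr>verts := {v \<in> verts F. \<exists>u\<in>verts F. honest_vertex w F u \<and> v \<in> tine_verts F u}\<rparr>"

lemma honest_trim_simps [simp]:
  "verts (honest_trim w F) = {v \<in> verts F. \<exists>u\<in>verts F. honest_vertex w F u \<and> v \<in> tine_verts F u}"
  "parent (honest_trim w F) = parent F" "label (honest_trim w F) = label F"
  "depth (honest_trim w F) = depth F" "tine_verts (honest_trim w F) = tine_verts F"
  unfolding honest_trim_def by simp_all

lemma closed_fork_honest_trim:
  assumes Fk: "is_fork w F"
  shows "closed_fork w (honest_trim w F)"
proof -
  let ?V = "{v \<in> verts F. \<exists>u\<in>verts F. honest_vertex w F u \<and> v \<in> tine_verts F u}"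
  have T: "is_tree F" using is_fork_tree[OF Fk] .
  have honest_in: "u \<in> ?V" if "u \<in> verts F" "honest_vertex w F u" for u
    using that self_in_tine_verts by blast
  have "0 \<in> verts F" using T unfolding is_tree_def by simp
  then have "0 \<in> ?V" using honest_in unfolding honest_vertex_def by simp
  moreover have "parent F v \<in> ?V" if "v \<in> ?V - {0}" for v
    using that tine_verts_parent[OF T] tine_verts_subset_verts[OF T] by blast
  moreover have "v \<in> ?V" if "v \<in> verts F" "hon_idx w (label F v)" for v
    using honest_in that unfolding honest_vertex_def by simp
  ultimately have "is_fork w (honest_trim w F)"
    unfolding honest_trim_def by (intro is_fork_restrict_verts[OF Fk]) auto
  moreover have "honest_vertex w (honest_trim w F) v" if leaf: "is_leaf (honest_trim w F) v" for v
  proof -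
    obtain u where u: "u \<in> verts F" "honest_vertex w F u" "v \<in> tine_verts F u"
      using leaf unfolding is_leaf_def by auto
    have "v = u"
    proof (rule ccontr)
      assume "v \<noteq> u"
      then obtain c where "c \<in> tine_verts F u" "c \<noteq> 0" "parent F c = v"
        using tine_verts_child[OF u(3)] by blast
      then show False
        using leaf u tine_verts_subset_verts[OF T u(1)] unfolding is_leaf_def by auto
    qed
    then show ?thesis using u(2) unfolding honest_vertex_def by simp
  qed
  ultimately show ?thesis unfolding closed_fork_def by blast
qed

text \<open>Cutting a tine back to its last honest vertex loses only adversarial vertices, which the
  reserve of that vertex pays for.\<close>

lemma honest_truncation:
  assumes Fk: "is_fork w F" and t: "t \<in> verts F"
  obtains z where "z \<in> verts F" "honest_vertex w F z" "tine_verts F z \<subseteq> tine_verts F t"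
    "depth F z \<le> depth F t" "depth F t - depth F z \<le> card {i. adv_idx w i \<and> label F z < i}"
proof -
  have T: "is_tree F" using is_fork_tree[OF Fk] .
  let ?a = "\<lambda>i. (parent F ^^ i) t"
  let ?hon = "\<lambda>i. ?a i = 0 \<or> hon_idx w (label F (?a i))"
  have "?hon (depth F t)" using funpow_parent_depth[OF T t] by simp
  define iz where "iz = (LEAST i. ?hon i)"
  have hon: "?hon iz" unfolding iz_def by (rule LeastI) fact
  have iz: "iz \<le> depth F t" unfolding iz_def by (rule Least_le) fact
  define z where "z = ?a iz"
  have adv: "adv_idx w (label F (?a i))" if "0 \<le> i" "i < iz" for i
  proof -
    have "\<not> ?hon i" using not_less_Least[of i ?hon] that unfolding iz_def by blast
    moreover have "i \<le> depth F t" using that iz by simp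
    ultimately show ?thesis using hon_or_adv_label[OF Fk funpow_parent_in_verts[OF T t]] by blast
  qed
  have "iz \<le> card {j. label F z < j \<and> j \<le> label F t \<and> adv_idx w j}"
    using length_adversarial_stretch[OF Fk t iz, of 0, OF adv] unfolding z_def by simp
  also have "\<dots> \<le> card {i. adv_idx w i \<and> label F z < i}" by (intro card_mono) auto
  finally have "iz \<le> card {i. adv_idx w i \<and> label F z < i}" .
  moreover have "z \<in> verts F" using funpow_parent_in_verts[OF T t iz] unfolding z_def .
  moreover have "depth F z = depth F t - iz" using depth_funpow_parent[OF T t iz] unfolding z_def .
  moreover have "tine_verts F z \<subseteq> tine_verts F t"
    using tine_verts_funpow_parent[OF T t iz] unfolding z_def .
  ultimately show ?thesis using that hon iz unfolding honest_vertex_def z_def by simp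
qed

lemma height_mono:
  assumes "is_tree G" "is_tree F" "verts G \<subseteq> verts F" "depth G = depth F"
  shows "height G \<le> height F"
proof -
  obtain v where "v \<in> verts G" "depth G v = height G" using height_attained[OF assms(1)] .
  then show ?thesis using height_ge[OF assms(2)] assms(3,4) by force
qed

lemma balanced_imp_mu_fork_nonneg:
  assumes bal: "balanced w m F"
  obtains G where "closed_fork w G" "0 \<le> mu_fork w m G"
proof -
  obtain t1 t2 where Fk: "is_fork w F" and t: "t1 \<in> verts F" "t2 \<in> verts F"
    and dj: "disjoint_over m F t1 t2" and d: "depth F t1 = height F" "depth F t2 = height F"
    using bal unfolding balanced_def by blast
  let ?G = "honest_trim w F"
  have T: "is_tree F" using is_fork_tree[OF Fk] .
  have cG: "closed_fork w ?G" using closed_fork_honest_trim[OF Fk] .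
  have TG: "is_tree ?G" using cG is_fork_tree unfolding closed_fork_def by blast
  have "height ?G \<le> height F"
    by (rule height_mono[OF TG T]) auto
  have good: "\<exists>z\<in>verts ?G. tine_verts ?G z \<subseteq> tine_verts F t \<and> 0 \<le> reach w ?G z"
    if tF: "t \<in> verts F" "depth F t = height F" for t
  proof -
    obtain z where z: "z \<in> verts F" "honest_vertex w F z" "tine_verts F z \<subseteq> tine_verts F t"
      "depth F z \<le> depth F t" "depth F t - depth F z \<le> card {i. adv_idx w i \<and> label F z < i}"
      using honest_truncation[OF Fk tF(1)] .
    have zG: "z \<in> verts ?G" using z(1,2) self_in_tine_verts by auto
    have "depth F z \<le> height ?G" using height_ge[OF TG zG] by simp
    then have "0 \<le> reach w ?G z"
      using z(4,5) tF(2) \<open>height ?G \<le> height F\<close>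
      unfolding reach_def gap_def reserve_def by simp
    then show ?thesis using zG z(3) by auto
  qed
  obtain z1 where z1: "z1 \<in> verts ?G" "tine_verts ?G z1 \<subseteq> tine_verts F t1" "0 \<le> reach w ?G z1"
    using good[OF t(1) d(1)] by blast
  obtain z2 where z2: "z2 \<in> verts ?G" "tine_verts ?G z2 \<subseteq> tine_verts F t2" "0 \<le> reach w ?G z2"
    using good[OF t(2) d(2)] by blast
  have "disjoint_over m ?G z1 z2"
    using dj z1(2) z2(2) unfolding disjoint_over_def by auto
  then have "min (reach w ?G z1) (reach w ?G z2) \<le> mu_fork w m ?G"
    using mu_fork_greatest(2)[OF TG z1(1) z2(1)] by simp
  then show ?thesis using that cG z1(3) z2(3) by simp
qed

section \<open>Nonnegative margin yields a balanced fork\<close>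

definition fork_extends :: "fork \<Rightarrow> fork \<Rightarrow> bool" where
  "fork_extends F G \<longleftrightarrow> verts F \<subseteq> verts G \<and>
     (\<forall>v\<in>verts F. depth G v = depth F v \<and> tine_verts G v = tine_verts F v \<and> label G v = label F v)"

lemma fork_extends_refl: "fork_extends F F"
  unfolding fork_extends_def by simp

lemma fork_extends_trans: "fork_extends F G \<Longrightarrow> fork_extends G H \<Longrightarrow> fork_extends F H"
  unfolding fork_extends_def by (simp add: subset_iff)

definition add_leaf :: "fork \<Rightarrow> nat \<Rightarrow> nat \<Rightarrow> nat \<Rightarrow> fork" where
  "add_leaf F x p l =
     F\<lparr>verts := insert x (verts F), parent := (parent F)(x := p), label := (label F)(x := l)\<rparr>"

lemma add_leaf_simps [simp]:
  "verts (add_leaf F x p l) = insert x (verts F)"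
  "parent (add_leaf F x p l) = (parent F)(x := p)"
  "label (add_leaf F x p l) = (label F)(x := l)"
  unfolding add_leaf_def by simp_all

context
  fixes F :: fork and x p l :: nat
  assumes T: "is_tree F" and p: "p \<in> verts F" and x: "x \<notin> verts F"
begin

lemma add_leaf_new_nonzero: "x \<noteq> 0"
proof -
  have "0 \<in> verts F" using T unfolding is_tree_def by simp
  then show ?thesis using x by metis
qed

lemma funpow_parent_add_leaf:
  assumes v: "v \<in> verts F"
  shows "i \<le> depth F v \<Longrightarrow> (parent (add_leaf F x p l) ^^ i) v = (parent F ^^ i) v"
proof (induction i)
  case (Suc i)
  have "(parent F ^^ i) v \<noteq> x" using funpow_parent_in_verts[OF T v] Suc.prems x by auto
  then show ?case using Suc by simp
qed simp

lemma depth_add_leaf: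
  assumes v: "v \<in> verts F"
  shows "depth (add_leaf F x p l) v = depth F v"
  unfolding depth_def[of "add_leaf F x p l"]
proof (rule Least_equality)
  show "(parent (add_leaf F x p l) ^^ depth F v) v = 0"
    using funpow_parent_add_leaf[OF v] funpow_parent_depth[OF T v] by simp
next
  fix n assume n: "(parent (add_leaf F x p l) ^^ n) v = 0"
  show "depth F v \<le> n"
  proof (rule ccontr)
    assume "\<not> depth F v \<le> n"
    then show False using n funpow_parent_add_leaf[OF v, of n] funpow_parent_nonzero[of n F v] by simp
  qed
qed

lemma fork_extends_add_leaf: "fork_extends F (add_leaf F x p l)"
  unfolding fork_extends_def
proof (intro conjI ballI)
  fix v assume v: "v \<in> verts F"
  show "depth (add_leaf F x p l) v = depth F v" using depth_add_leaf[OF v] .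
  show "tine_verts (add_leaf F x p l) v = tine_verts F v"
    unfolding tine_verts_def depth_add_leaf[OF v] using funpow_parent_add_leaf[OF v] by force
  show "label (add_leaf F x p l) v = label F v" using v x by auto
qed auto

lemma funpow_Suc_parent_add_leaf:
  "(parent (add_leaf F x p l) ^^ Suc n) x = (parent (add_leaf F x p l) ^^ n) p"
  by (simp add: funpow_Suc_right del: funpow.simps)

lemma depth_add_leaf_new: "depth (add_leaf F x p l) x = Suc (depth F p)"
  unfolding depth_def[of "add_leaf F x p l"]
proof (rule Least_equality)
  show "(parent (add_leaf F x p l) ^^ Suc (depth F p)) x = 0"
    unfolding funpow_Suc_parent_add_leaf
    using funpow_parent_add_leaf[OF p] funpow_parent_depth[OF T p] by simp
next
  fix n assume n: "(parent (add_leaf F x p l) ^^ n) x = 0"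
  obtain n' where n': "n = Suc n'" using n add_leaf_new_nonzero by (cases n) auto
  then have "(parent (add_leaf F x p l) ^^ n') p = 0" using n funpow_Suc_parent_add_leaf by simp
  then have "depth F p \<le> n'"
    using funpow_parent_add_leaf[OF p, of n'] funpow_parent_nonzero[of n' F p] by fastforce
  then show "Suc (depth F p) \<le> n" using n' by simp
qed

lemma tine_verts_add_leaf_new: "tine_verts (add_leaf F x p l) x = insert x (tine_verts F p)"
proof -
  have "{(parent (add_leaf F x p l) ^^ i) x | i. i \<le> Suc (depth F p)}
      = insert x {(parent F ^^ i) p | i. i \<le> depth F p}"
  proof (intro set_eqI iffI)
    fix u assume "u \<in> {(parent (add_leaf F x p l) ^^ i) x | i. i \<le> Suc (depth F p)}"
    then obtain i where "i \<le> Suc (depth F p)" "u = (parent (add_leaf F x p l) ^^ i) x" by blast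
    then show "u \<in> insert x {(parent F ^^ i) p | i. i \<le> depth F p}"
      using funpow_Suc_parent_add_leaf funpow_parent_add_leaf[OF p] by (cases i) auto
  next
    fix u assume "u \<in> insert x {(parent F ^^ i) p | i. i \<le> depth F p}"
    then consider "u = x" | i where "i \<le> depth F p" "u = (parent F ^^ i) p" by blast
    then show "u \<in> {(parent (add_leaf F x p l) ^^ i) x | i. i \<le> Suc (depth F p)}"
    proof cases
      case 1
      then show ?thesis by (intro CollectI exI[of _ 0]) simp
    next
      case 2
      then show ?thesis using funpow_Suc_parent_add_leaf[of i] funpow_parent_add_leaf[OF p]
        by (intro CollectI exI[of _ "Suc i"]) simp
    qed
  qed
  then show ?thesis unfolding tine_verts_def depth_add_leaf_new .
qed

lemma is_tree_add_leaf: "is_tree (add_leaf F x p l)"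
proof -
  let ?G = "add_leaf F x p l"
  have "\<exists>n. (parent ?G ^^ n) v = 0" if "v \<in> verts ?G" for v
  proof (cases "v = x")
    case True
    then show ?thesis using funpow_parent_add_leaf[OF p] funpow_parent_depth[OF T p]
      by (metis funpow_Suc_parent_add_leaf order_refl)
  next
    case False
    then have "v \<in> verts F" using that by simp
    then show ?thesis using funpow_parent_add_leaf funpow_parent_depth[OF T] by (metis order_refl)
  qed
  moreover have "parent ?G v \<in> verts ?G" if "v \<in> verts ?G - {0}" for v
    using that p T unfolding is_tree_def by (cases "v = x") auto
  ultimately show ?thesis using T unfolding is_tree_def by simp
qed

lemma is_fork_add_leaf:
  assumes Fk: "is_fork w F" and l: "adv_idx w l" "label F p < l"
  shows "is_fork w (add_leaf F x p l)"
  unfolding is_fork_def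
proof (intro conjI ballI allI impI)
  let ?G = "add_leaf F x p l"
  show "is_tree ?G" by (rule is_tree_add_leaf)
  show "label ?G 0 = 0" using label_root[OF Fk] add_leaf_new_nonzero by simp
next
  fix v assume "v \<in> verts (add_leaf F x p l)"
  then show "label (add_leaf F x p l) v \<le> length w"
    using l(1) label_le_length[OF Fk] unfolding adv_idx_def by auto
next
  fix v assume v: "v \<in> verts (add_leaf F x p l) - {0}"
  show "label (add_leaf F x p l) (parent (add_leaf F x p l) v) < label (add_leaf F x p l) v"
  proof (cases "v = x")
    case False
    then have "v \<in> verts F - {0}" using v by simp
    moreover from this have "parent F v \<noteq> x" using T x unfolding is_tree_def by auto
    ultimately show ?thesis using label_parent_less[OF Fk] False by simp
  qed (use l p x in auto)
next
  fix i assume hi: "hon_idx w i"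
  have "i \<noteq> l" using not_hon_and_adv_idx hi l(1) by blast
  obtain v where v: "v \<in> verts F" "label F v = i" and uniq: "\<And>u. u \<in> verts F \<Longrightarrow> label F u = i \<Longrightarrow> u = v"
    using ex1_hon_vertex[OF Fk hi] by metis
  show "\<exists>!v. v \<in> verts (add_leaf F x p l) \<and> label (add_leaf F x p l) v = i"
  proof (rule ex1I[of _ v])
    show "v \<in> verts (add_leaf F x p l) \<and> label (add_leaf F x p l) v = i" using v x by auto
  next
    fix u assume "u \<in> verts (add_leaf F x p l) \<and> label (add_leaf F x p l) u = i"
    then show "u = v" using uniq \<open>i \<noteq> l\<close> by (cases "u = x") auto
  qed
next
  fix u v assume uv: "u \<in> verts (add_leaf F x p l)" "v \<in> verts (add_leaf F x p l)"
    "hon_idx w (label (add_leaf F x p l) u) \<and> hon_idx w (label (add_leaf F x p l) v) \<and>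
     label (add_leaf F x p l) u < label (add_leaf F x p l) v"
  have "u \<noteq> x" "v \<noteq> x" using uv(3) l(1) not_hon_and_adv_idx by auto
  then have "u \<in> verts F" "v \<in> verts F" using uv(1,2) by auto
  then show "depth (add_leaf F x p l) u < depth (add_leaf F x p l) v"
    using depth_less_if_hon_label_less[OF Fk] uv(3) \<open>u \<noteq> x\<close> \<open>v \<noteq> x\<close> depth_add_leaf by simp
qed

end

lemma fresh_vertex: "is_tree F \<Longrightarrow> Suc (Max (verts F)) \<notin> verts F"
  unfolding is_tree_def using Max_ge Suc_n_not_le_n by blast

lemma least_adv_idx_greater:
  assumes "0 < card {i. adv_idx w i \<and> a < i}"
  obtains l where "adv_idx w l" "a < l" "card {i. adv_idx w i \<and> a < i} = Suc (card {i. adv_idx w i \<and> l < i})"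
proof -
  define A where "A = {i. adv_idx w i \<and> a < i}"
  define l where "l = Min A"
  have "finite A" unfolding A_def by simp
  moreover have "A \<noteq> {}" using assms unfolding A_def by (metis card.empty less_irrefl)
  ultimately have lA: "l \<in> A" and lmin: "\<And>i. i \<in> A \<Longrightarrow> l \<le> i" unfolding l_def by auto
  have "{i. adv_idx w i \<and> l < i} = A - {l}"
  proof (intro set_eqI iffI)
    fix i assume "i \<in> {i. adv_idx w i \<and> l < i}"
    then show "i \<in> A - {l}" using lA unfolding A_def by auto
  next
    fix i assume "i \<in> A - {l}"
    then show "i \<in> {i. adv_idx w i \<and> l < i}" using lmin[of i] unfolding A_def by auto
  qed
  then have "card A = Suc (card {i. adv_idx w i \<and> l < i})"
    using card_Suc_Diff1[OF \<open>finite A\<close> lA] by simp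
  moreover have "adv_idx w l" "a < l" using lA unfolding A_def by auto
  ultimately show ?thesis using that unfolding A_def by blast
qed

text \<open>Each new vertex takes the smallest reserve index still available; the last conclusion records
  the reserve that remains.\<close>

lemma extend_tine_adversarially:
  assumes Fk: "is_fork w F" and t: "t \<in> verts F"
  shows "g \<le> card {i. adv_idx w i \<and> label F t < i} \<Longrightarrow>
    \<exists>G e. is_fork w G \<and> fork_extends F G \<and> (\<forall>v\<in>verts G - verts F. depth G v \<le> depth F t + g) \<and>
      e \<in> verts G \<and> depth G e = depth F t + g \<and> tine_verts G e \<subseteq> tine_verts F t \<union> (verts G - verts F) \<and>
      card {i. adv_idx w i \<and> label F t < i} \<le> g + card {i. adv_idx w i \<and> label G e < i}"
proof (induction g)
  case 0
  show ?case by (intro exI[of _ F] exI[of _ t]) (simp add: Fk t self_in_tine_verts fork_extends_refl)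
next
  case (Suc g)
  then obtain G e where G: "is_fork w G" "fork_extends F G" "\<forall>v\<in>verts G - verts F. depth G v \<le> depth F t + g"
    and e: "e \<in> verts G" "depth G e = depth F t + g" "tine_verts G e \<subseteq> tine_verts F t \<union> (verts G - verts F)"
      "card {i. adv_idx w i \<and> label F t < i} \<le> g + card {i. adv_idx w i \<and> label G e < i}"
    by auto
  have "0 < card {i. adv_idx w i \<and> label G e < i}" using e(4) Suc.prems by linarith
  then obtain l where l: "adv_idx w l" "label G e < l"
    and cardA: "card {i. adv_idx w i \<and> label G e < i} = Suc (card {i. adv_idx w i \<and> l < i})"
    by (rule least_adv_idx_greater)
  have TG: "is_tree G" using is_fork_tree[OF G(1)] .
  define x where "x = Suc (Max (verts G))"
  have x: "x \<notin> verts G" unfolding x_def using fresh_vertex[OF TG] .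
  let ?H = "add_leaf G x e l"
  have ext: "fork_extends G ?H" using fork_extends_add_leaf[OF TG e(1) x] .
  have "is_fork w ?H" using is_fork_add_leaf[OF TG e(1) x G(1) l] .
  moreover have "fork_extends F ?H" using fork_extends_trans[OF G(2) ext] .
  moreover have "\<forall>v\<in>verts ?H - verts F. depth ?H v \<le> depth F t + Suc g"
  proof
    fix v assume v: "v \<in> verts ?H - verts F"
    show "depth ?H v \<le> depth F t + Suc g"
    proof (cases "v = x")
      case False
      then have "v \<in> verts G - verts F" using v by simp
      then have "depth G v \<le> depth F t + g" using G(3) by blast
      then show ?thesis using depth_add_leaf[OF TG e(1) x, of v l] \<open>v \<in> verts G - verts F\<close> by simp
    qed (use depth_add_leaf_new[OF TG e(1) x] e(2) in simp)
  qed
  moreover have "depth ?H x = depth F t + Suc g"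
    using depth_add_leaf_new[OF TG e(1) x] e(2) by simp
  moreover have "tine_verts ?H x \<subseteq> tine_verts F t \<union> (verts ?H - verts F)"
    using tine_verts_add_leaf_new[OF TG e(1) x] e(3) x G(2) unfolding fork_extends_def by auto
  moreover have "card {i. adv_idx w i \<and> label F t < i} \<le> Suc g + card {i. adv_idx w i \<and> label ?H x < i}"
    using e(4) cardA by simp
  ultimately show ?case by (intro exI[of _ ?H] exI[of _ x]) simp
qed

lemma extend_tine_to_height:
  assumes Fk: "is_fork w F" and t: "t \<in> verts F" and r: "0 \<le> reach w F t"
  obtains G e where "is_fork w G" "fork_extends F G" "\<forall>v\<in>verts G - verts F. depth G v \<le> height F"
    "e \<in> verts G" "depth G e = height F" "tine_verts G e \<subseteq> tine_verts F t \<union> (verts G - verts F)"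
proof -
  have h: "depth F t + (height F - depth F t) = height F"
    using height_ge[OF is_fork_tree[OF Fk] t] by simp
  then have "height F - depth F t \<le> card {i. adv_idx w i \<and> label F t < i}"
    using r unfolding reach_def reserve_def gap_def by simp
  then show ?thesis using extend_tine_adversarially[OF Fk t] h that by metis
qed

lemma height_fork_extends:
  assumes T: "is_tree F" "is_tree G" and ext: "fork_extends F G"
    and new: "\<forall>v\<in>verts G - verts F. depth G v \<le> height F"
  shows "height G = height F"
proof (rule antisym)
  have "depth G v \<le> height F" if "v \<in> verts G" for v
    using that new height_ge[OF T(1)] ext unfolding fork_extends_def by (cases "v \<in> verts F") auto
  then show "height G \<le> height F" using height_attained[OF T(2)] by metis
  show "height F \<le> height G"
    using height_attained[OF T(1)] height_ge[OF T(2)] ext unfolding fork_extends_def by (metis subsetD)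
qed

lemma mu_fork_nonneg_imp_balanced:
  assumes cF: "closed_fork w F" and nn: "0 \<le> mu_fork w m F"
  shows "\<exists>G. balanced w m G"
proof -
  have Fk: "is_fork w F" using cF unfolding closed_fork_def by simp
  have T: "is_tree F" using is_fork_tree[OF Fk] .
  obtain t1 t2 where t: "t1 \<in> verts F" "t2 \<in> verts F" and dj: "disjoint_over m F t1 t2"
    and mu: "mu_fork w m F = min (reach w F t1) (reach w F t2)"
    using mu_fork_greatest(1)[OF T] by blast
  obtain G1 e1 where G1: "is_fork w G1" "fork_extends F G1" "\<forall>v\<in>verts G1 - verts F. depth G1 v \<le> height F"
    and e1: "e1 \<in> verts G1" "depth G1 e1 = height F" "tine_verts G1 e1 \<subseteq> tine_verts F t1 \<union> (verts G1 - verts F)"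
    using extend_tine_to_height[OF Fk t(1)] nn unfolding mu by auto
  have h1: "height G1 = height F" using height_fork_extends[OF T is_fork_tree[OF G1(1)] G1(2,3)] .
  have t2: "t2 \<in> verts G1" "reach w G1 t2 = reach w F t2" "tine_verts G1 t2 = tine_verts F t2"
    using G1(2) t(2) h1 unfolding fork_extends_def reach_def reserve_def gap_def by auto
  obtain G2 e2 where G2: "is_fork w G2" "fork_extends G1 G2" "\<forall>v\<in>verts G2 - verts G1. depth G2 v \<le> height G1"
    and e2: "e2 \<in> verts G2" "depth G2 e2 = height G1" "tine_verts G2 e2 \<subseteq> tine_verts F t2 \<union> (verts G2 - verts G1)"
    using extend_tine_to_height[OF G1(1) t2(1)] nn t2(2,3) unfolding mu by auto
  have h2: "height G2 = height G1" using height_fork_extends[OF is_fork_tree[OF G1(1)] is_fork_tree[OF G2(1)] G2(2,3)] .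
  have ext: "fork_extends F G2" using fork_extends_trans[OF G1(2) G2(2)] .
  have "disjoint_over m G2 e1 e2"
    unfolding disjoint_over_def
  proof (intro ballI impI)
    fix u assume u: "u \<in> tine_verts G2 e1 \<inter> tine_verts G2 e2" and nz: "u \<noteq> 0"
    have sub: "tine_verts F t1 \<subseteq> verts F" "tine_verts F t2 \<subseteq> verts F"
      using tine_verts_subset_verts[OF T] t by auto
    have "u \<in> tine_verts F t1 \<union> (verts G1 - verts F)" using u G2(2) e1 unfolding fork_extends_def by auto
    then have "u \<in> tine_verts F t1" "u \<in> tine_verts F t2"
      using u e2(3) sub G1(2) unfolding fork_extends_def by auto
    then show "label G2 u \<le> m" using dj nz sub ext unfolding disjoint_over_def fork_extends_def by auto
  qed
  moreover have "depth G2 e1 = height G2" "depth G2 e2 = height G2"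
    using G2(2) e1(1,2) e2(2) h1 h2 unfolding fork_extends_def by auto
  ultimately have "balanced w m G2"
    unfolding balanced_def using G2(1,2) e1(1) e2(1) unfolding fork_extends_def by blast
  then show ?thesis by blast
qed

lemma ex_balanced_iff_mu_nonneg: "(\<exists>F. balanced (x @ y) (length x) F) \<longleftrightarrow> 0 \<le> mu x y"
proof
  assume "\<exists>F. balanced (x @ y) (length x) F"
  then obtain G where "closed_fork (x @ y) G" "0 \<le> mu_fork (x @ y) (length x) G"
    using balanced_imp_mu_fork_nonneg by metis
  then show "0 \<le> mu x y" using mu_greatest(2) by fastforce
next
  assume "0 \<le> mu x y"
  moreover obtain F where "closed_fork (x @ y) F" "mu x y = mu_fork (x @ y) (length x) F"
    using mu_greatest(1) by blast
  ultimately show "\<exists>F. balanced (x @ y) (length x) F" using mu_fork_nonneg_imp_balanced by simp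
qed

section \<open>Detecting Catalan slots by scanning the walk\<close>

definition walk :: "bool list \<Rightarrow> nat \<Rightarrow> int" where
  "walk w j = int (card {i. i \<le> j \<and> adv_idx w i}) - int (card {i. i \<le> j \<and> hon_idx w i})"

definition walk_min :: "bool list \<Rightarrow> int" where
  "walk_min p = Min (walk p ` {..length p})"

lemma card_le_split:
  fixes a c :: nat
  assumes "a \<le> c"
  shows "card {i. i \<le> c \<and> P i} = card {i. i \<le> a \<and> P i} + card {i. a < i \<and> i \<le> c \<and> P i}"
proof -
  have "{i. i \<le> c \<and> P i} = {i. i \<le> a \<and> P i} \<union> {i. a < i \<and> i \<le> c \<and> P i}" using assms by auto
  moreover have "finite {i. a < i \<and> i \<le> c \<and> P i}" by simp
  ultimately show ?thesis by (simp add: card_Un_disjoint disjoint_iff)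
qed

lemma walk_diff:
  "a \<le> c \<Longrightarrow> walk w c - walk w a =
     int (card {i. a < i \<and> i \<le> c \<and> adv_idx w i}) - int (card {i. a < i \<and> i \<le> c \<and> hon_idx w i})"
  unfolding walk_def using card_le_split[of a c] by simp

lemma walk_zero [simp]: "walk w 0 = 0"
proof -
  have empty: "{i. i \<le> 0 \<and> adv_idx w i} = {}" "{i. i \<le> 0 \<and> hon_idx w i} = {}"
    unfolding adv_idx_def hon_idx_def by auto
  show ?thesis unfolding walk_def empty by simp
qed

lemma card_le_Suc: "card {i. i \<le> Suc j \<and> P i} = card {i. i \<le> j \<and> P i} + (if P (Suc j) then 1 else 0)"
proof -
  have "{i. i \<le> Suc j \<and> P i} =
      (if P (Suc j) then insert (Suc j) {i. i \<le> j \<and> P i} else {i. i \<le> j \<and> P i})"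
    by (auto simp: le_Suc_eq)
  then show ?thesis by simp
qed

lemma walk_Suc:
  "walk w (Suc j) = walk w j + (if adv_idx w (Suc j) then 1 else 0) - (if hon_idx w (Suc j) then 1 else 0)"
  unfolding walk_def card_le_Suc by simp

lemma adv_idx_snoc: "adv_idx (p @ [b]) i \<longleftrightarrow> adv_idx p i \<or> (i = Suc (length p) \<and> b)"
  unfolding adv_idx_def by (auto simp: nth_append le_Suc_eq)

lemma hon_idx_snoc: "hon_idx (p @ [b]) i \<longleftrightarrow> hon_idx p i \<or> (i = Suc (length p) \<and> \<not> b)"
  unfolding hon_idx_def by (auto simp: nth_append le_Suc_eq)

lemma walk_snoc: "j \<le> length p \<Longrightarrow> walk (p @ [b]) j = walk p j"
  unfolding walk_def adv_idx_snoc hon_idx_snoc by (auto intro!: arg_cong2[where f = "\<lambda>A B. int (card A) - int (card B)"])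

lemma walk_snoc_last: "walk (p @ [b]) (Suc (length p)) = walk p (length p) + (if b then 1 else -1)"
  using walk_Suc[of "p @ [b]" "length p"] walk_snoc[of "length p" p b]
  by (simp add: adv_idx_snoc hon_idx_snoc adv_idx_def hon_idx_def)

lemma walk_min_le: "j \<le> length p \<Longrightarrow> walk_min p \<le> walk p j"
  unfolding walk_min_def by auto

lemma walk_min_Nil [simp]: "walk_min [] = 0"
  unfolding walk_min_def by simp

lemma walk_min_snoc: "walk_min (p @ [b]) = min (walk_min p) (walk (p @ [b]) (Suc (length p)))"
proof -
  have "walk (p @ [b]) ` {..length (p @ [b])} = insert (walk (p @ [b]) (Suc (length p))) (walk p ` {..length p})"
    using walk_snoc[of _ p b] by (auto simp: atMost_Suc)
  then show ?thesis unfolding walk_min_def by (simp add: min.commute)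
qed

lemma catalan_slot_of_walk:
  assumes h: "1 \<le> h" "h \<le> length w"
    and before: "\<And>j. j < h \<Longrightarrow> walk w h < walk w j"
    and after: "\<And>b. h \<le> b \<Longrightarrow> b \<le> length w \<Longrightarrow> walk w b \<le> walk w h"
  shows "catalan_slot w h"
  unfolding catalan_slot_def
proof (intro conjI allI impI)
  have "walk w h < walk w (h - 1)" using before h by simp
  moreover have "walk w h = walk w (h - 1) + (if adv_idx w h then 1 else 0) - (if hon_idx w h then 1 else 0)"
    using walk_Suc[of w "h - 1"] h(1) by simp
  ultimately have "\<not> adv_idx w h" by (auto split: if_splits)
  then show "hon_idx w h" using h unfolding hon_idx_def adv_idx_def by auto
next
  fix a b assume ab: "a < h" "h < b" "b \<le> Suc (length w)"
  have "h \<le> b - 1" "b - 1 \<le> length w" "a \<le> b - 1" using ab by auto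
  then have "walk w (b - 1) < walk w a" using before[of a] after[of "b - 1"] ab(1) by simp
  moreover have "{i. a < i \<and> i \<le> b - 1 \<and> P i} = {i. a < i \<and> i < b \<and> P i}" for P using ab by auto
  ultimately show "card {i. a < i \<and> i < b \<and> adv_idx w i} < card {i. a < i \<and> i < b \<and> hon_idx w i}"
    using walk_diff[OF \<open>a \<le> b - 1\<close>, of w] by simp
qed

text \<open>In state \<open>Searching d\<close> no candidate
  slot after position m is known and the walk is d above its running minimum; in state \<open>Found u v\<close>
  the candidate is a strict new minimum h > m, the walk is u below it and it is v above the running
  minimum.  A candidate survives exactly until the walk climbs above it.\<close>

datatype scan_state = Searching nat | Found nat nat

definition scan_step :: "nat \<Rightarrow> nat \<Rightarrow> scan_state \<Rightarrow> bool \<Rightarrow> scan_state" where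
  "scan_step m n s b = (case s of
     Searching d \<Rightarrow>
       if b then Searching (Suc d) else if d \<noteq> 0 then Searching (d - 1) else if n < m then Searching 0 else Found 0 0
   | Found u v \<Rightarrow>
       if b then (if u = 0 then Searching (Suc v) else Found (u - 1) v) else Found (Suc u) (max v (Suc u)))"

fun scan_rev :: "nat \<Rightarrow> bool list \<Rightarrow> scan_state" where
  "scan_rev m [] = Searching 0"
| "scan_rev m (b # r) = scan_step m (length r) (scan_rev m r) b"

definition scan :: "nat \<Rightarrow> bool list \<Rightarrow> scan_state" where
  "scan m p = scan_rev m (rev p)"

lemma scan_Nil [simp]: "scan m [] = Searching 0"
  unfolding scan_def by simp

lemma scan_snoc [simp]: "scan m (p @ [b]) = scan_step m (length p) (scan m p) b"
  unfolding scan_def by simp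

definition scan_inv :: "nat \<Rightarrow> bool list \<Rightarrow> scan_state \<Rightarrow> bool" where
  "scan_inv m p s = (case s of
     Searching d \<Rightarrow> int d = walk p (length p) - walk_min p
   | Found u v \<Rightarrow> (\<exists>h. m < h \<and> h \<le> length p \<and> (\<forall>j<h. walk p h < walk p j) \<and>
        (\<forall>b. h \<le> b \<and> b \<le> length p \<longrightarrow> walk p b \<le> walk p h) \<and>
        int u = walk p h - walk p (length p) \<and> int v = walk p h - walk_min p))"

lemma scan_inv_step_Searching:
  assumes inv: "int d = walk p (length p) - walk_min p"
  shows "scan_inv m (p @ [b]) (scan_step m (length p) (Searching d) b)"
proof -
  let ?n = "length p" and ?p = "p @ [b]"
  have last: "walk ?p (Suc ?n) = walk p ?n + (if b then 1 else -1)" by (rule walk_snoc_last)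
  have min: "walk_min ?p = min (walk_min p) (walk ?p (Suc ?n))" by (rule walk_min_snoc)
  have "walk_min p \<le> walk p j" if "j \<le> ?n" for j using walk_min_le that .
  show ?thesis
  proof (cases "b \<or> d \<noteq> 0 \<or> ?n < m")
    case True
    then show ?thesis using inv last min walk_min_le[of ?n p] by (auto simp: scan_inv_def scan_step_def)
  next
    case False
    have "\<forall>j<Suc ?n. walk ?p (Suc ?n) < walk ?p j"
      using False inv last walk_min_le[of _ p] walk_snoc[of _ p b] by (fastforce simp: less_Suc_eq_le)
    then have "scan_inv m ?p (Found 0 0)"
      unfolding scan_inv_def using False inv last min by (auto intro!: exI[of _ "Suc ?n"])
    then show ?thesis using False by (simp add: scan_step_def)
  qed
qed

lemma scan_inv_step_Found:
  assumes h: "m < h" "h \<le> length p" "\<forall>j<h. walk p h < walk p j"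
    "\<forall>b. h \<le> b \<and> b \<le> length p \<longrightarrow> walk p b \<le> walk p h"
    "int u = walk p h - walk p (length p)" "int v = walk p h - walk_min p"
  shows "scan_inv m (p @ [b]) (scan_step m (length p) (Found u v) b)"
proof -
  let ?n = "length p" and ?p = "p @ [b]"
  have last: "walk ?p (Suc ?n) = walk p ?n + (if b then 1 else -1)" by (rule walk_snoc_last)
  have min: "walk_min ?p = min (walk_min p) (walk ?p (Suc ?n))" by (rule walk_min_snoc)
  have same: "walk ?p j = walk p j" if "j \<le> ?n" for j using walk_snoc that .
  show ?thesis
  proof (cases "b \<and> u = 0")
    case True
    then show ?thesis using h last min walk_min_le[of ?n p] by (simp add: scan_inv_def scan_step_def)
  next
    case False
    have before: "\<forall>j<h. walk ?p h < walk ?p j" using h(2,3) same by simp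
    have after: "\<forall>b'. h \<le> b' \<and> b' \<le> length ?p \<longrightarrow> walk ?p b' \<le> walk ?p h"
      using h(2,4,5) same last False by (auto simp: le_Suc_eq)
    have "walk ?p h - walk ?p (length ?p) = walk p h - walk p ?n - (if b then 1 else -1)"
      using last same h(2) by simp
    moreover have "walk ?p h - walk_min ?p = max (walk p h - walk_min p) (walk p h - walk ?p (Suc ?n))"
      using min same h(2) by simp
    ultimately show ?thesis
      using h(1,2,5,6) before after False last walk_min_le[OF le_refl, of p]
      by (auto simp: scan_inv_def scan_step_def intro!: exI[of _ h])
  qed
qed

lemma scan_inv: "scan_inv m p (scan m p)"
proof (induction p rule: rev_induct)
  case Nil
  show ?case unfolding scan_inv_def by simp
next
  case (snoc b p)
  then show ?case
    using scan_inv_step_Searching scan_inv_step_Found unfolding scan_inv_def[of m p]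
    by (cases "scan m p") auto
qed

lemma scan_Found_length: "scan m p = Found u v \<Longrightarrow> m < length p \<and> u \<le> v"
  using scan_inv[of m p] walk_min_le[of "length p" p] unfolding scan_inv_def by auto

lemma mu_nonneg_imp_scan_Searching:
  assumes "m \<le> length w" "0 \<le> mu (take m w) (drop m w)"
  obtains d where "scan m w = Searching d"
proof (cases "scan m w")
  case (Found u v)
  then obtain h where "m < h" "h \<le> length w" "\<forall>j<h. walk w h < walk w j"
      "\<forall>b. h \<le> b \<and> b \<le> length w \<longrightarrow> walk w b \<le> walk w h"
    using scan_inv[of m w] unfolding scan_inv_def by auto
  then have "catalan_slot w h" "m < h" by (auto intro: catalan_slot_of_walk)
  moreover have "\<exists>F. balanced w m F"
    using ex_balanced_iff_mu_nonneg[of "take m w" "drop m w"] assms by simp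
  ultimately show ?thesis using catalan_slot_not_balanced by blast
qed

section \<open>A potential for the scanner\<close>

text \<open>Constants for which the potential below contracts by the factor \<open>bet\<close> per step after
  position m, whenever adversarial steps have probability at most q.\<close>

locale potential_constants =
  fixes q lam kap c bet :: real
  assumes q0: "0 \<le> q" and q1: "q \<le> 1" and lam1: "1 \<le> lam" and kap0: "0 < kap"
    and c0: "0 < c" and c1: "c \<le> 1" and bet0: "0 < bet" and bet1: "bet < 1"
    and searching_up: "1 \<le> bet * lam"
    and searching_drift: "q * lam + (1 - q) / lam \<le> bet"
    and searching_found: "q * lam + (1 - q) * c \<le> bet"
    and found_down: "lam / kap \<le> bet"
    and found_drift: "q * kap + (1 - q) * lam / kap \<le> bet"
    and found_at_slot: "q * lam + (1 - q) * c * lam / kap \<le> bet * c"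
begin

definition potential :: "scan_state \<Rightarrow> real" where
  "potential s = (case s of Searching d \<Rightarrow> lam ^ d | Found u v \<Rightarrow> c * (1 / kap) ^ u * lam ^ v)"

lemma potential_nonneg: "0 \<le> potential s"
  unfolding potential_def using lam1 kap0 c0 by (cases s) auto

lemma c_le_bet: "c \<le> bet"
proof -
  have "c = q * c + (1 - q) * c" by (simp add: algebra_simps)
  also have "\<dots> \<le> q * lam + (1 - q) * c" using q0 c1 lam1 by (intro add_right_mono mult_left_mono) auto
  finally show ?thesis using searching_found by simp
qed

lemma potential_step_Searching:
  assumes "m \<le> n"
  shows "potential (scan_step m n (Searching d) False) \<le> bet * potential (Searching d)"
    and "q * potential (scan_step m n (Searching d) True) + (1 - q) * potential (scan_step m n (Searching d) False)
      \<le> bet * potential (Searching d)"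
proof -
  have "potential (scan_step m n (Searching d) False) \<le> bet * potential (Searching d) \<and>
      q * potential (scan_step m n (Searching d) True) + (1 - q) * potential (scan_step m n (Searching d) False)
      \<le> bet * potential (Searching d)"
  proof (cases d)
    case 0
    then show ?thesis using assms c_le_bet searching_found by (simp add: potential_def scan_step_def)
  next
    case (Suc d')
    have "lam ^ d' \<le> (bet * lam) * lam ^ d'" using searching_up lam1 by (simp add: mult_le_cancel_right1)
    moreover have "q * (lam * (lam * lam ^ d')) + (1 - q) * lam ^ d'
        = (q * lam + (1 - q) / lam) * (lam * lam ^ d')"
      using lam1 by (simp add: field_simps)
    moreover have "(q * lam + (1 - q) / lam) * (lam * lam ^ d') \<le> bet * (lam * lam ^ d')"
      using searching_drift lam1 by (intro mult_right_mono) auto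
    ultimately show ?thesis using Suc by (simp add: potential_def scan_step_def algebra_simps)
  qed
  then show "potential (scan_step m n (Searching d) False) \<le> bet * potential (Searching d)"
    and "q * potential (scan_step m n (Searching d) True) + (1 - q) * potential (scan_step m n (Searching d) False)
      \<le> bet * potential (Searching d)" by auto
qed

lemma potential_step_Found_False:
  assumes "u \<le> v"
  shows "potential (scan_step m n (Found u v) False) \<le> lam / kap * potential (Found u v)"
proof -
  have "lam ^ max v (Suc u) \<le> lam * lam ^ v"
    using assms lam1 power_increasing[of "max v (Suc u)" "Suc v" lam] by simp
  then have "c * (1 / kap) ^ u * lam ^ max v (Suc u) \<le> c * (1 / kap) ^ u * (lam * lam ^ v)"
    using c0 kap0 by (intro mult_left_mono) auto
  then show ?thesis using kap0 by (simp add: potential_def scan_step_def field_simps)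
qed

lemma potential_step_Found:
  assumes "u \<le> v"
  shows "potential (scan_step m n (Found u v) False) \<le> bet * potential (Found u v)"
    and "q * potential (scan_step m n (Found u v) True) + (1 - q) * potential (scan_step m n (Found u v) False)
      \<le> bet * potential (Found u v)"
proof -
  let ?W = "potential (Found u v)" and ?F = "potential (scan_step m n (Found u v) False)"
  have W0: "0 \<le> ?W" by (rule potential_nonneg)
  have F: "?F \<le> lam / kap * ?W" using potential_step_Found_False[OF assms] .
  also have "\<dots> \<le> bet * ?W" using found_down W0 by (rule mult_right_mono)
  finally show "?F \<le> bet * ?W" .
  have "(1 - q) * ?F \<le> (1 - q) * (lam / kap * ?W)" using F q1 by (intro mult_left_mono) auto
  moreover have "q * potential (scan_step m n (Found u v) True) + (1 - q) * (lam / kap * ?W) \<le> bet * ?W"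
  proof (cases u)
    case 0
    have "(q * lam + (1 - q) * c * lam / kap) * lam ^ v \<le> bet * c * lam ^ v"
      using found_at_slot lam1 by (intro mult_right_mono) auto
    then show ?thesis using 0 c0 by (simp add: potential_def scan_step_def field_simps)
  next
    case (Suc u')
    have "(q * kap + (1 - q) * lam / kap) * ?W \<le> bet * ?W" using found_drift W0 by (rule mult_right_mono)
    then show ?thesis using Suc kap0 by (simp add: potential_def scan_step_def field_simps)
  qed
  ultimately show "q * potential (scan_step m n (Found u v) True) + (1 - q) * ?F \<le> bet * ?W" by linarith
qed

text \<open>Before position m the scanner is searching at some height d (the \<open>Found\<close> branch of
  \<open>scan_value\<close> is unreachable there).  The value of a prefix of length n \<le> m bounds the expected
  potential at position m by a one-step recursion: a step multiplies \<open>lam ^ d\<close> by at most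
  \<open>theta\<close>, up to the additive error \<open>alpha\<close> at height 0.\<close>

definition theta :: real where "theta = q * lam + (1 - q) / lam"
definition alpha :: real where "alpha = q * lam + (1 - q)"

definition scan_value :: "nat \<Rightarrow> nat \<Rightarrow> bool list \<Rightarrow> real" where
  "scan_value m k p = (if length p \<le> m then
      (case scan m p of
        Searching d \<Rightarrow> bet ^ k * (theta ^ (m - length p) * lam ^ d + alpha * (\<Sum>i<m - length p. theta ^ i))
      | Found u v \<Rightarrow> 0)
    else bet ^ (m + k - length p) * potential (scan m p))"

lemma theta_nonneg: "0 \<le> theta"
  unfolding theta_def using q0 q1 lam1 by simp

lemma theta_less_1: "theta < 1"
  unfolding theta_def using searching_drift bet1 by simp

lemma alpha_ge_1: "1 \<le> alpha"
  unfolding alpha_def using q0 lam1 mult_left_mono[of 1 lam q] by simp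

lemma theta_lam_ge_1: "1 \<le> theta * lam"
proof -
  have "theta * lam = q * (lam * lam) + (1 - q)" unfolding theta_def using lam1 by (simp add: field_simps)
  moreover have "q \<le> q * (lam * lam)" using q0 lam1 mult_left_mono[of 1 "lam * lam" q] mult_mono[of 1 lam 1 lam]
    by simp
  ultimately show ?thesis by simp
qed

lemma scan_value_nonneg: "0 \<le> scan_value m k p"
  unfolding scan_value_def
  using bet0 theta_nonneg lam1 alpha_ge_1 potential_nonneg
  by (auto split: scan_state.split intro!: mult_nonneg_nonneg add_nonneg_nonneg sum_nonneg)

lemma scan_value_after:
  assumes "m \<le> length p"
  shows "scan_value m k p = bet ^ (m + k - length p) * potential (scan m p)"
proof (cases "length p = m")
  case True
  then obtain d where "scan m p = Searching d" using scan_Found_length[of m p] by (cases "scan m p") auto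
  then show ?thesis unfolding scan_value_def using True by (simp add: potential_def)
qed (use assms in \<open>simp add: scan_value_def\<close>)

lemma scan_value_final:
  assumes "length p = m + k" "scan m p = Searching d"
  shows "1 \<le> scan_value m k p"
  using scan_value_after[of m p k] assms lam1 by (simp add: potential_def)

lemma scan_value_Nil: "scan_value m k [] \<le> bet ^ k * (1 + alpha / (1 - theta))"
proof -
  have "(\<Sum>i<m. theta ^ i) = (1 - theta ^ m) / (1 - theta)" using theta_less_1 by (simp add: sum_gp_strict)
  also have "\<dots> \<le> 1 / (1 - theta)" using theta_nonneg theta_less_1 by (simp add: divide_right_mono)
  finally have "alpha * (\<Sum>i<m. theta ^ i) \<le> alpha / (1 - theta)" using alpha_ge_1 mult_left_mono by fastforce
  moreover have "theta ^ m \<le> 1" using theta_nonneg theta_less_1 by (simp add: power_le_one)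
  ultimately show ?thesis unfolding scan_value_def using bet0 by (simp add: mult_left_mono)
qed

lemma scan_value_step_before:
  assumes n: "length p < m"
  shows "scan_value m k (p @ [False]) \<le> scan_value m k p"
    and "q * scan_value m k (p @ [True]) + (1 - q) * scan_value m k (p @ [False]) \<le> scan_value m k p"
proof -
  obtain d where d: "scan m p = Searching d" using scan_Found_length[of m p] n by (cases "scan m p") auto
  obtain j where j: "m - length p = Suc j" using n by (cases "m - length p") auto
  have j': "m - Suc (length p) = j" using j by simp
  define S where "S = (\<Sum>i<j. theta ^ i)"
  define d' where "d' = d - 1"
  have V: "scan_value m k p = bet ^ k * (theta ^ Suc j * lam ^ d + alpha * (S + theta ^ j))"
    unfolding scan_value_def S_def using n d j by simp
  have VT: "scan_value m k (p @ [True]) = bet ^ k * (theta ^ j * lam ^ Suc d + alpha * S)"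
    unfolding scan_value_def S_def using n d j' by (simp add: scan_step_def)
  have VF: "scan_value m k (p @ [False]) = bet ^ k * (theta ^ j * lam ^ d' + alpha * S)"
    unfolding scan_value_def S_def d'_def using n d j' by (simp add: scan_step_def)
  have down: "lam ^ d' \<le> theta * lam ^ d + alpha"
  proof (cases d)
    case (Suc e)
    have "lam ^ e \<le> (theta * lam) * lam ^ e" using theta_lam_ge_1 lam1 by (simp add: mult_le_cancel_right1)
    then show ?thesis using Suc alpha_ge_1 unfolding d'_def by (simp add: ac_simps)
  qed (use alpha_ge_1 theta_nonneg d'_def in simp)
  have mixed: "q * lam ^ Suc d + (1 - q) * lam ^ d' \<le> theta * lam ^ d + alpha"
  proof (cases d)
    case (Suc e)
    then have "q * lam ^ Suc d + (1 - q) * lam ^ d' = theta * lam ^ d"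
      unfolding theta_def d'_def using lam1 by (simp add: field_simps)
    then show ?thesis using alpha_ge_1 by simp
  qed (use theta_nonneg d'_def in \<open>simp add: alpha_def\<close>)
  have tj: "0 \<le> theta ^ j" "0 \<le> bet ^ k" using theta_nonneg bet0 by auto
  have "theta ^ j * lam ^ d' \<le> theta ^ j * (theta * lam ^ d + alpha)" using down tj(1) by (rule mult_left_mono)
  then show "scan_value m k (p @ [False]) \<le> scan_value m k p"
    unfolding V VF using tj by (intro mult_left_mono) (simp_all add: algebra_simps)
  have "theta ^ j * (q * lam ^ Suc d + (1 - q) * lam ^ d') \<le> theta ^ j * (theta * lam ^ d + alpha)"
    using mixed tj(1) by (rule mult_left_mono)
  then have "q * (theta ^ j * lam ^ Suc d + alpha * S) + (1 - q) * (theta ^ j * lam ^ d' + alpha * S)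
      \<le> theta ^ Suc j * lam ^ d + alpha * (S + theta ^ j)"
    by (simp add: algebra_simps)
  then show "q * scan_value m k (p @ [True]) + (1 - q) * scan_value m k (p @ [False]) \<le> scan_value m k p"
    unfolding V VT VF using tj mult_left_mono by (fastforce simp: algebra_simps)
qed

lemma scan_value_step_after:
  assumes mn: "m \<le> length p" and n: "length p < m + k"
  shows "scan_value m k (p @ [False]) \<le> scan_value m k p"
    and "q * scan_value m k (p @ [True]) + (1 - q) * scan_value m k (p @ [False]) \<le> scan_value m k p"
proof -
  obtain r where r: "m + k - length p = Suc r" using n by (cases "m + k - length p") auto
  let ?s = "scan m p"
  have V: "scan_value m k p = bet ^ r * (bet * potential ?s)" using scan_value_after[OF mn] r by simp
  have Vb: "scan_value m k (p @ [b]) = bet ^ r * potential (scan_step m (length p) ?s b)" for b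
  proof -
    have "m + k - Suc (length p) = r" using r by simp
    then show ?thesis using scan_value_after[of m "p @ [b]" k] mn by simp
  qed
  have step: "potential (scan_step m (length p) ?s False) \<le> bet * potential ?s \<and>
      q * potential (scan_step m (length p) ?s True) + (1 - q) * potential (scan_step m (length p) ?s False)
        \<le> bet * potential ?s"
    using potential_step_Searching[OF mn] potential_step_Found scan_Found_length[of m p]
    by (cases ?s) auto
  have br: "0 \<le> bet ^ r" using bet0 by simp
  show "scan_value m k (p @ [False]) \<le> scan_value m k p"
    unfolding V Vb using step br by (simp add: mult_left_mono)
  show "q * scan_value m k (p @ [True]) + (1 - q) * scan_value m k (p @ [False]) \<le> scan_value m k p"
    unfolding V Vb using mult_left_mono[OF conjunct2[OF step] br] by (simp add: algebra_simps)
qed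

end

section \<open>The supermartingale bound\<close>

definition prefix_prob :: "bool list pmf \<Rightarrow> bool list \<Rightarrow> real" where
  "prefix_prob W p = measure_pmf.prob W {w. take (length p) w = p}"

lemma prefix_prob_Nil [simp]: "prefix_prob W [] = 1"
  unfolding prefix_prob_def by simp

lemma prefix_prob_snoc_split:
  assumes supp: "set_pmf W \<subseteq> {w. length w = T}" and n: "length p < T"
  shows "prefix_prob W p = prefix_prob W (p @ [True]) + prefix_prob W (p @ [False])"
proof -
  let ?A = "{w. take (length p) w = p}"
  let ?T = "{w. take (Suc (length p)) w = p @ [True]}" and ?F = "{w. take (Suc (length p)) w = p @ [False]}"
  have split: "take (Suc (length p)) w = take (length p) w @ [w ! length p]" if "w \<in> set_pmf W" for w
    using that supp n by (auto simp: take_Suc_conv_app_nth)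
  have "?A \<inter> set_pmf W = (?T \<union> ?F) \<inter> set_pmf W"
  proof (intro set_eqI iffI)
    fix w assume "w \<in> ?A \<inter> set_pmf W"
    then show "w \<in> (?T \<union> ?F) \<inter> set_pmf W" using split[of w] by (cases "w ! length p") auto
  next
    fix w assume "w \<in> (?T \<union> ?F) \<inter> set_pmf W"
    then show "w \<in> ?A \<inter> set_pmf W" using split[of w] by auto
  qed
  then have "measure_pmf.prob W ?A = measure_pmf.prob W (?T \<union> ?F)" by (metis measure_Int_set_pmf)
  also have "\<dots> = measure_pmf.prob W ?T + measure_pmf.prob W ?F"
    by (rule measure_pmf.finite_measure_Union) auto
  finally show ?thesis unfolding prefix_prob_def by simp
qed

lemma lists_length_Suc_eq:
  "{p :: bool list. length p = Suc n} = (\<lambda>p. p @ [True]) ` {p. length p = n} \<union> (\<lambda>p. p @ [False]) ` {p. length p = n}"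
proof (intro set_eqI iffI)
  fix p :: "bool list" assume "p \<in> {p. length p = Suc n}"
  then obtain r b where "p = r @ [b]" "length r = n" by (auto simp: length_Suc_conv_rev)
  then show "p \<in> (\<lambda>p. p @ [True]) ` {p. length p = n} \<union> (\<lambda>p. p @ [False]) ` {p. length p = n}"
    by (cases b) auto
qed auto

text \<open>Moving probability mass from the successor \<open>p @ [False]\<close> to \<open>p @ [True]\<close> can only increase
  the expectation when \<open>V (p @ [True])\<close> is the larger value, so it suffices to check the extreme
  case where \<open>p @ [True]\<close> carries the maximal mass \<open>q * a\<close>.\<close>

lemma two_successors_le:
  fixes a aT aF q v vT vF :: real
  assumes "0 \<le> aT" "0 \<le> aF" "a = aT + aF" "aT \<le> q * a"
    and "vF \<le> v" "q * vT + (1 - q) * vF \<le> v"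
  shows "aT * vT + aF * vF \<le> a * v"
proof -
  have a0: "0 \<le> a" using assms(1-3) by simp
  show ?thesis
  proof (cases "vF \<le> vT")
    case True
    have "aT * vT + aF * vF = aT * (vT - vF) + a * vF" using assms(3) by (simp add: algebra_simps)
    also have "\<dots> \<le> q * a * (vT - vF) + a * vF" using True assms(4) by (simp add: mult_right_mono)
    also have "\<dots> = a * (q * vT + (1 - q) * vF)" by (simp add: algebra_simps)
    also have "\<dots> \<le> a * v" using assms(6) a0 by (rule mult_left_mono)
    finally show ?thesis .
  next
    case False
    have "aT * vT \<le> aT * vF" using False assms(1) by (simp add: mult_left_mono)
    then have "aT * vT + aF * vF \<le> a * vF" using assms(3) by (simp add: algebra_simps)
    also have "\<dots> \<le> a * v" using assms(5) a0 by (rule mult_left_mono)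
    finally show ?thesis .
  qed
qed

lemma expected_value_le_initial:
  fixes W :: "bool list pmf" and V :: "bool list \<Rightarrow> real"
  assumes supp: "set_pmf W \<subseteq> {w. length w = T}"
    and mart: "\<And>p. length p < T \<Longrightarrow> prefix_prob W (p @ [True]) \<le> q * prefix_prob W p"
    and V_False: "\<And>p. length p < T \<Longrightarrow> V (p @ [False]) \<le> V p"
    and V_mix: "\<And>p. length p < T \<Longrightarrow> q * V (p @ [True]) + (1 - q) * V (p @ [False]) \<le> V p"
  shows "n \<le> T \<Longrightarrow> (\<Sum>p | length p = n. prefix_prob W p * V p) \<le> V []"
proof (induction n)
  case 0
  have "{p :: bool list. length p = 0} = {[]}" by auto
  then show ?case by simp
next
  case (Suc n)
  let ?L = "{p :: bool list. length p = n}"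
  have fin: "finite ?L" using finite_lists_length_eq[of "UNIV :: bool set" n] by simp
  have inj: "inj_on (\<lambda>p. p @ [b]) ?L" for b by (rule inj_onI) simp
  have "(\<lambda>p. p @ [True]) ` ?L \<inter> (\<lambda>p. p @ [False]) ` ?L = {}" by auto
  then have "(\<Sum>p | length p = Suc n. prefix_prob W p * V p)
      = (\<Sum>p\<in>(\<lambda>p. p @ [True]) ` ?L. prefix_prob W p * V p) + (\<Sum>p\<in>(\<lambda>p. p @ [False]) ` ?L. prefix_prob W p * V p)"
    unfolding lists_length_Suc_eq using fin by (simp add: sum.union_disjoint)
  also have "\<dots> = (\<Sum>p\<in>?L. prefix_prob W (p @ [True]) * V (p @ [True]) + prefix_prob W (p @ [False]) * V (p @ [False]))"
    by (simp add: sum.reindex[OF inj] sum.distrib)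
  also have "\<dots> \<le> (\<Sum>p\<in>?L. prefix_prob W p * V p)"
  proof (rule sum_mono)
    fix p assume "p \<in> ?L"
    then have n: "length p < T" using Suc.prems by simp
    show "prefix_prob W (p @ [True]) * V (p @ [True]) + prefix_prob W (p @ [False]) * V (p @ [False])
        \<le> prefix_prob W p * V p"
      by (rule two_successors_le) (use prefix_prob_snoc_split[OF supp n] mart[OF n] V_False[OF n] V_mix[OF n]
          in \<open>auto simp: prefix_prob_def\<close>)
  qed
  also have "\<dots> \<le> V []" using Suc by simp
  finally show ?case .
qed

lemma prob_le_initial_value:
  fixes W :: "bool list pmf" and V :: "bool list \<Rightarrow> real"
  assumes supp: "set_pmf W \<subseteq> {w. length w = T}"
    and mart: "\<And>p. length p < T \<Longrightarrow> prefix_prob W (p @ [True]) \<le> q * prefix_prob W p"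
    and V_False: "\<And>p. length p < T \<Longrightarrow> V (p @ [False]) \<le> V p"
    and V_mix: "\<And>p. length p < T \<Longrightarrow> q * V (p @ [True]) + (1 - q) * V (p @ [False]) \<le> V p"
    and V_nonneg: "\<And>p. 0 \<le> V p"
    and V_final: "\<And>p. length p = T \<Longrightarrow> p \<in> E \<Longrightarrow> 1 \<le> V p"
  shows "measure_pmf.prob W E \<le> V []"
proof -
  let ?L = "{p :: bool list. length p = T}"
  have fin: "finite ?L" using finite_lists_length_eq[of "UNIV :: bool set" T] by simp
  have "measure_pmf.prob W E \<le> measure_pmf.prob W (E \<inter> ?L)"
    using supp by (subst measure_Int_set_pmf[symmetric]) (auto intro!: measure_pmf.finite_measure_mono)
  also have "\<dots> = sum (pmf W) (E \<inter> ?L)"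
    using fin by (intro measure_measure_pmf_finite) auto
  also have "\<dots> \<le> (\<Sum>p\<in>E \<inter> ?L. prefix_prob W p * V p)"
  proof (rule sum_mono)
    fix p assume p: "p \<in> E \<inter> ?L"
    have "{w. take (length p) w = p} \<inter> set_pmf W = {p} \<inter> set_pmf W" using supp p by auto
    then have "prefix_prob W p = pmf W p"
      unfolding prefix_prob_def by (metis measure_Int_set_pmf measure_pmf_single)
    then show "pmf W p \<le> prefix_prob W p * V p"
      using V_final[of p] p pmf_nonneg[of W p] mult_left_mono[of 1 "V p" "pmf W p"] by simp
  qed
  also have "\<dots> \<le> (\<Sum>p\<in>?L. prefix_prob W p * V p)"
    using fin V_nonneg by (intro sum_mono2) (auto simp: prefix_prob_def)
  also have "\<dots> \<le> V []" using expected_value_le_initial[OF supp mart V_False V_mix] by simp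
  finally show ?thesis .
qed

lemma (in potential_constants) prob_mu_nonneg_le:
  assumes supp: "set_pmf W \<subseteq> {w. length w = m + k}"
    and mart: "\<And>p. length p < m + k \<Longrightarrow> prefix_prob W (p @ [True]) \<le> q * prefix_prob W p"
  shows "measure_pmf.prob W {w. 0 \<le> mu (take m w) (drop m w)} \<le> bet ^ k * (1 + alpha / (1 - theta))"
proof -
  let ?E = "{w. \<exists>d. scan m w = Searching d}"
  have "{w. 0 \<le> mu (take m w) (drop m w)} \<inter> set_pmf W \<subseteq> ?E"
  proof
    fix w assume w: "w \<in> {w. 0 \<le> mu (take m w) (drop m w)} \<inter> set_pmf W"
    then have "m \<le> length w" using supp by auto
    then obtain d where "scan m w = Searching d" using mu_nonneg_imp_scan_Searching w by blast
    then show "w \<in> ?E" by simp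
  qed
  then have "measure_pmf.prob W {w. 0 \<le> mu (take m w) (drop m w)} \<le> measure_pmf.prob W ?E"
    by (subst measure_Int_set_pmf[symmetric]) (auto intro!: measure_pmf.finite_measure_mono)
  also have "\<dots> \<le> scan_value m k []"
  proof (rule prob_le_initial_value[OF supp mart])
    fix p :: "bool list" assume "length p < m + k"
    then show "scan_value m k (p @ [False]) \<le> scan_value m k p"
      and "q * scan_value m k (p @ [True]) + (1 - q) * scan_value m k (p @ [False]) \<le> scan_value m k p"
      using scan_value_step_before scan_value_step_after by (cases "length p < m"; simp)+
  qed (auto intro: scan_value_nonneg scan_value_final)
  also have "\<dots> \<le> bet ^ k * (1 + alpha / (1 - theta))" by (rule scan_value_Nil)
  finally show ?thesis .
qed

lemma prob_balanced_eq_prob_mu_nonneg: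
  assumes supp: "set_pmf W \<subseteq> {w. length w = T}" and m: "m \<le> T"
  shows "measure_pmf.prob W {w. \<exists>F. balanced w m F} = measure_pmf.prob W {w. 0 \<le> mu (take m w) (drop m w)}"
proof -
  have "(\<exists>F. balanced w m F) \<longleftrightarrow> 0 \<le> mu (take m w) (drop m w)" if "w \<in> set_pmf W" for w
  proof -
    have "length (take m w) = m" using that supp m by auto
    then show ?thesis using ex_balanced_iff_mu_nonneg[of "take m w" "drop m w"] by simp
  qed
  then have "{w. \<exists>F. balanced w m F} \<inter> set_pmf W = {w. 0 \<le> mu (take m w) (drop m w)} \<inter> set_pmf W"
    by blast
  then show ?thesis by (metis measure_Int_set_pmf)
qed

section \<open>Choice of the constants\<close>

lemma eventually_nonneg_at_right_0:
  fixes f :: "real \<Rightarrow> real"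
  assumes "(f has_real_derivative D) (at 0)" "0 < D" "f 0 = 0"
  shows "\<forall>\<^sub>F x in at_right 0. 0 \<le> f x"
proof -
  obtain d where "0 < d" "\<forall>h>0. h < d \<longrightarrow> f 0 < f (0 + h)"
    using DERIV_pos_inc_right[OF assms(1,2)] by blast
  then show ?thesis unfolding eventually_at_right_field using assms(3) by (intro exI[of _ d]) auto
qed

text \<open>Each defining inequality of the locale holds with equality at x = 0 and its slack has positive
  derivative there under the hypotheses on the slopes b, \<open>\<gamma>\<close>, s.\<close>

lemma eventually_potential_constants:
  fixes q b \<gamma> s :: real
  assumes q: "0 \<le> q" "q < 1/2" and b: "0 < b" "b < 1" "b < 1 - 2 * q" and \<gamma>: "q + b < (1 - q) * \<gamma>"
    and s: "1 + b < s" "1 - q + b < (1 - 2 * q) * s" "1 + b + q * \<gamma> < (1 - q) * s"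
  shows "\<forall>\<^sub>F x in at_right 0. potential_constants q (1 + x) (1 + s * x) (1 - \<gamma> * x) (1 - b * x)"
proof -
  have \<gamma>0: "0 < \<gamma>"
  proof (rule ccontr)
    assume "\<not> 0 < \<gamma>"
    then have "(1 - q) * \<gamma> \<le> 0" using q by (simp add: mult_nonneg_nonpos)
    then show False using q b \<gamma> by linarith
  qed
  define f1 where "f1 x = (1 - b * x) * (1 + x) - 1" for x
  define f2 where "f2 x = (1 - b * x) - q * (1 + x) - (1 - q) / (1 + x)" for x
  define f3 where "f3 x = (1 - b * x) - q * (1 + x) - (1 - q) * (1 - \<gamma> * x)" for x
  define f4 where "f4 x = (1 - b * x) - (1 + x) / (1 + s * x)" for x
  define f5 where "f5 x = (1 - b * x) - q * (1 + s * x) - (1 - q) * (1 + x) / (1 + s * x)" for x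
  define f6 where "f6 x = (1 - b * x) * (1 - \<gamma> * x) - q * (1 + x) - (1 - q) * (1 - \<gamma> * x) * (1 + x) / (1 + s * x)" for x
  have E1: "\<forall>\<^sub>F x in at_right 0. 0 \<le> f1 x"
    by (rule eventually_nonneg_at_right_0[where D = "1 - b"])
      (use b in \<open>auto intro!: derivative_eq_intros simp: f1_def algebra_simps\<close>)
  have E2: "\<forall>\<^sub>F x in at_right 0. 0 \<le> f2 x"
    by (rule eventually_nonneg_at_right_0[where D = "1 - 2 * q - b"])
      (use b in \<open>auto intro!: derivative_eq_intros simp: f2_def algebra_simps\<close>)
  have E3: "\<forall>\<^sub>F x in at_right 0. 0 \<le> f3 x"
    by (rule eventually_nonneg_at_right_0[where D = "(1 - q) * \<gamma> - q - b"])
      (use \<gamma> in \<open>auto intro!: derivative_eq_intros simp: f3_def algebra_simps\<close>)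
  have E4: "\<forall>\<^sub>F x in at_right 0. 0 \<le> f4 x"
    by (rule eventually_nonneg_at_right_0[where D = "s - 1 - b"])
      (use s in \<open>auto intro!: derivative_eq_intros simp: f4_def algebra_simps\<close>)
  have E5: "\<forall>\<^sub>F x in at_right 0. 0 \<le> f5 x"
    by (rule eventually_nonneg_at_right_0[where D = "(1 - 2 * q) * s - (1 - q) - b"])
      (use s in \<open>auto intro!: derivative_eq_intros simp: f5_def algebra_simps\<close>)
  have E6: "\<forall>\<^sub>F x in at_right 0. 0 \<le> f6 x"
    by (rule eventually_nonneg_at_right_0[where D = "(1 - q) * s - b - q * \<gamma> - 1"])
      (use s in \<open>auto intro!: derivative_eq_intros simp: f6_def algebra_simps\<close>)
  have "\<forall>\<^sub>F x in at_right 0. x < 1 / \<gamma>"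
    unfolding eventually_at_right_field using \<gamma>0 by (intro exI[of _ "1 / \<gamma>"]) auto
  moreover have "\<forall>\<^sub>F x in at_right 0. x < 1 / b"
    unfolding eventually_at_right_field using b by (intro exI[of _ "1 / b"]) auto
  ultimately show ?thesis
    using E1 E2 E3 E4 E5 E6 eventually_at_right_less[of "0::real"]
  proof eventually_elim
    case (elim x)
    then have "\<gamma> * x < 1" "b * x < 1" "0 < 1 + s * x" using \<gamma>0 b s by (simp_all add: field_simps add_pos_pos)
    then show ?case
      using q b \<gamma>0 elim unfolding potential_constants_def f1_def f2_def f3_def f4_def f5_def f6_def
      by simp
  qed
qed

lemma potential_constants_exist:
  fixes \<epsilon> :: real
  assumes e: "0 < \<epsilon>" "\<epsilon> < 1"
  shows "\<exists>lam kap c bet. potential_constants ((1 - \<epsilon>) / 2) lam kap c bet"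
proof -
  define q where "q = (1 - \<epsilon>) / 2"
  define b where "b = \<epsilon> / 2"
  define \<gamma> where "\<gamma> = (q + b) / (1 - q) + 1"
  define s where "s = (1 + b) + (1 - q + b) / \<epsilon> + (1 + b + q * \<gamma>) / (1 - q) + 1"
  have q: "0 \<le> q" "q < 1/2" "1 - 2 * q = \<epsilon>" unfolding q_def using e by (auto simp: field_simps)
  have b: "0 < b" "b < 1" "b < 1 - 2 * q" unfolding b_def using e q(3) by auto
  have "(1 - q) * \<gamma> = q + b + (1 - q)" unfolding \<gamma>_def using q(2) by (simp add: field_simps)
  then have \<gamma>: "q + b < (1 - q) * \<gamma>" using q(2) by linarith
  have "1 \<le> \<gamma>" unfolding \<gamma>_def using q b by simp
  then have pos: "0 < (1 - q + b) / \<epsilon>" "0 < (1 + b + q * \<gamma>) / (1 - q)"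
    using q b e by (auto intro!: divide_pos_pos add_pos_nonneg)
  have s1: "1 + b < s" using pos unfolding s_def by simp
  have "(1 - q + b) / \<epsilon> < s" using pos b unfolding s_def by simp
  then have s2: "1 - q + b < \<epsilon> * s" using e by (simp add: field_simps)
  have "(1 + b + q * \<gamma>) / (1 - q) < s" using pos b unfolding s_def by simp
  then have s3: "1 + b + q * \<gamma> < (1 - q) * s" using q(2) by (simp add: field_simps)
  have "\<forall>\<^sub>F x in at_right 0. potential_constants q (1 + x) (1 + s * x) (1 - \<gamma> * x) (1 - b * x)"
    using eventually_potential_constants[OF q(1,2) b \<gamma> s1 s2[folded q(3)] s3] .
  then have "\<exists>x. potential_constants q (1 + x) (1 + s * x) (1 - \<gamma> * x) (1 - b * x)"
    by (rule eventually_happens'[rotated]) simp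
  then show ?thesis unfolding q_def by blast
qed

theorem theorem4:
  fixes \<epsilon> :: real
  assumes "0 < \<epsilon>" and "\<epsilon> < 1"
  shows "\<exists>C c. c > 0 \<and>
    (\<forall>(T::nat) (k::nat) (W :: bool list pmf).
       k \<le> T \<longrightarrow> set_pmf W \<subseteq> {w. length w = T} \<longrightarrow> martingale_cond \<epsilon> T W \<longrightarrow>
       measure_pmf.prob W {w. \<exists>F. balanced w (T - k) F}
         = measure_pmf.prob W {w. mu (take (T - k) w) (drop (T - k) w) \<ge> 0}
       \<and> measure_pmf.prob W {w. mu (take (T - k) w) (drop (T - k) w) \<ge> 0}
         \<le> C * exp (- c * real k))"
proof -
  obtain lam kap c bet where "potential_constants ((1 - \<epsilon>) / 2) lam kap c bet"
    using potential_constants_exist[OF assms] by blast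
  then interpret potential_constants "(1 - \<epsilon>) / 2" lam kap c bet .
  have "bet ^ k = exp (- (- ln bet) * real k)" for k
    using exp_of_nat_mult[of k "ln bet"] bet0 by (simp add: mult.commute)
  moreover have "0 < - ln bet" using bet0 bet1 by simp
  moreover have "measure_pmf.prob W {w. 0 \<le> mu (take (T - k) w) (drop (T - k) w)}
      \<le> bet ^ k * (1 + alpha / (1 - theta))"
    if "k \<le> T" "set_pmf W \<subseteq> {w. length w = T}" "martingale_cond \<epsilon> T W" for T k W
    using prob_mu_nonneg_le[of W "T - k" k] that
    unfolding martingale_cond_def prefix_prob_def by simp
  ultimately show ?thesis
    using prob_balanced_eq_prob_mu_nonneg
    by (intro exI[of _ "1 + alpha / (1 - theta)"] exI[of _ "- ln bet"]) (auto simp: mult.commute)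
qed

end
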